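(* Let $D=\{z\in\mathbb{C}:|z-1/2|\le1/2\}$ and let $U\subset\mathbb{R}^2=\mathbb{C}$ be a bounded, mildly regular open set with $\operatorname{int}(D)\subset U$, $U\supset D$... more precisely $\bar U\supset D$, $x>0$ on $U$, and $0\le x\le1$, $|y|\le1/2$ for all $(x,y)\in\bar U$. Let $\mathcal{B}$ be an infinite subset of $I_1:=\{m+n\mathrm{i}:m\in\mathbb{N},n\in\mathbb{Z}\}$, $\theta_b(z)=1/(z+b)$, let $\tau(\mathcal{B})=\inf\{t>0:\sum_{b\in\mathcal{B}}|b|^{-2t}<\infty\}$, let $s>\tau(\mathcal{B})$, and let $v_s$ be the (unique up to scalar multiples) strictly positive continuous eigenfunction on $\bar U$ of $(L_sf)(z)=\sum_{b\in\mathcal{B}}|z+b|^{-2s}f(\theta_b(z))$. Let $R>2$ and $$C(R,s)=\exp\Big(\frac{-\sqrt5s}{\sqrt{R^2-R}}\Big)\Big(\frac{R}{R+\sqrt5+5/(4R)}\Big)^s.$$ Then for all $z\in\bar U$, $$\sum_{b\in\mathcal{B},|b|>R}\frac{v_s(\theta_b(z))}{|z+b|^{2s}}\ge C(R,s)v_s(0)\sum_{b\in\mathcal{B},|b|>R}\frac{1}{|b|^{2s}}.$$ Moreover, with $\theta_R=\arcsin(1/(R+\sqrt2))$: if $\mathcal{B}=I_1$ and $s>1$, then for all $z\in\bar U$ $$\sum_{b\in I_1,|b|>R}\frac{v_s(\theta_b(z))}{|z+b|^{2s}}\ge C(R,s)v_s(0)(\pi-2\theta_R)\frac{1}{2s-2}\Big(\frac{1}{R+\sqrt2}\Big)^{2s-2};$$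 and if $\mathcal{B}=I_2:=\{m+n\mathrm{i}:m\in\mathbb{N},n\in\mathbb{Z},n<0\}$ and $s>1$, then for all $z\in\bar U$ $$\sum_{b\in I_2,|b|>R}\frac{v_s(\theta_b(z))}{|z+b|^{2s}}\ge C(R,s)v_s(0)(\pi/2-2\theta_R)\frac{1}{2s-2}\Big(\frac{1}{R+\sqrt2}\Big)^{2s-2}.$$
   Context: A bounded open set $H\subset\mathbb{R}^n$ is mildly regular if there exist $\eta>0$ and $M\ge1$ such that whenever $x,y\in H$ and $\|x-y\|<\eta$, there is a Lipschitz map $\psi:[0,1]\to H$ with $\psi(0)=x$, $\psi(1)=y$ and $\int_0^1\|\psi'(t)\|\,dt\le M\|x-y\|$. $\mathbb{N}=\{1,2,\dots\}$. *)

theory Defs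
  imports "HOL-Analysis.Analysis"
begin

text \<open>Mild regularity of a (bounded open) set in the plane, identified with the complex numbers.
  The length of a Lipschitz path is the integral of the norm of its (a.e. existing) derivative.\<close>
definition mildly_regular :: "complex set \<Rightarrow> bool" where
  "mildly_regular H \<longleftrightarrow> bounded H \<and> open H \<and>
     (\<exists>\<eta>>0. \<exists>M\<ge>1. \<forall>x\<in>H. \<forall>y\<in>H. dist x y < \<eta> \<longrightarrow>
        (\<exists>\<psi> :: real \<Rightarrow> complex. (\<exists>L. L-lipschitz_on {0..1} \<psi>) \<and> \<psi> ` {0..1} \<subseteq> H \<and>
            \<psi> 0 = x \<and> \<psi> 1 = y \<and>
            integral {0..1} (\<lambda>t. norm (vector_derivative \<psi> (at t))) \<le> M * dist x y))"

text \<open>Gaussian-integer index sets (with \<open>\<nat> = {1,2,...}\<close>).\<close>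
definition I1 :: "complex set" where
  "I1 = {Complex (real m) (real_of_int n) | m n. m \<ge> (1::nat)}"

definition I2 :: "complex set" where
  "I2 = {Complex (real m) (real_of_int n) | m n. m \<ge> (1::nat) \<and> n < 0}"

definition theta :: "complex \<Rightarrow> complex \<Rightarrow> complex" where
  "theta b z = 1 / (z + b)"

definition tau :: "complex set \<Rightarrow> real" where
  "tau B = Inf {t. t > 0 \<and> (\<lambda>b. norm b powr (-2 * t)) summable_on B}"

definition CRs :: "real \<Rightarrow> real \<Rightarrow> real" where
  "CRs R s = exp (- sqrt 5 * s / sqrt (R^2 - R)) * (R / (R + sqrt 5 + 5 / (4 * R))) powr s"

definition thetaR :: "real \<Rightarrow> real" where
  "thetaR R = arcsin (1 / (R + sqrt 2))"

end

theory Submission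
  imports Defs
begin

text \<open>Each summand is compared with \<open>v 0 / |b|^(2s)\<close>. Since \<open>|z| \<le> sqrt 5 / 2\<close>, the weight
  \<open>|z + b|^(-2s)\<close> is at least \<open>(|b| / (|b| + sqrt 5 / 2))^(2s) |b|^(-2s)\<close>, and
  \<open>v (theta b z) \<ge> exp (-2s |theta b z|) v 0\<close> with \<open>|theta b z| \<le> 1 / sqrt (R^2 - R)\<close>.
  The last estimate on \<open>v\<close> comes from the eigen-equation: the kernels \<open>|w - p|^(-2s)\<close> with
  \<open>Re p \<le> -1\<close> are permuted by composition with the maps \<open>theta b\<close>, so the supremum of their
  log-ratios dominates \<open>ln v w1 - ln v w2\<close>; this holds for nearby points by uniform continuity and
  spreads to all of the disc \<open>D\<close> because two steps of the iteration contract distances by 4.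

  For \<open>B = I1\<close> and \<open>B = I2\<close> the remaining sum of \<open>|b|^(-2s)\<close> is bounded below by Abel summation,
  from a lower bound on the number of Gaussian integers in the annuli \<open>R < |b| \<le> t\<close>, which is
  obtained by comparing the lattice points of a quarter disc with the area under the circle.\<close>

section \<open>The maps \<open>theta b\<close>\<close>

definition disc_D :: "complex set" where
  "disc_D = cball (1/2) (1/2)"

lemma disc_D_Re:
  assumes "w \<in> disc_D" shows "0 \<le> Re w" "Re w \<le> 1"
proof -
  have "cmod (w - 1/2) \<le> 1/2" using assms by (simp add: disc_D_def dist_norm norm_minus_commute)
  moreover have "\<bar>Re (w - 1/2)\<bar> \<le> cmod (w - 1/2)" by (rule abs_Re_le_cmod)
  ultimately show "0 \<le> Re w" "Re w \<le> 1" by auto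
qed

lemma disc_D_diameter:
  assumes "w1 \<in> disc_D" "w2 \<in> disc_D" shows "cmod (w1 - w2) \<le> 1"
  using assms norm_triangle_ineq4[of "w1 - 1/2" "w2 - 1/2"]
  by (simp add: disc_D_def dist_norm norm_minus_commute)

lemma norm_add_ge_1:
  assumes "0 \<le> Re w" "1 \<le> Re b" shows "1 \<le> cmod (w + b)"
  using assms complex_Re_le_cmod[of "w + b"] by simp

lemma theta_in_disc_D:
  assumes "0 \<le> Re w" "1 \<le> Re b" shows "theta b w \<in> disc_D"
proof -
  define u where "u = w + b"
  have Re_u: "1 \<le> Re u" using assms by (simp add: u_def)
  then have u: "0 < cmod u" by auto
  have "(cmod (2 - u))^2 = (2 - Re u)^2 + (Im u)^2" "(cmod u)^2 = (Re u)^2 + (Im u)^2"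
    by (simp_all add: cmod_power2)
  then have "(cmod (2 - u))^2 \<le> (cmod u)^2"
    using Re_u by (simp add: power2_eq_square algebra_simps)
  then have "cmod (2 - u) \<le> cmod u"
    using norm_ge_zero power2_le_imp_le by blast
  moreover have "1/u - 1/2 = (2 - u) / (2*u)" using u by (auto simp add: field_simps)
  ultimately have "cmod (1/u - 1/2) \<le> 1/2"
    using u by (simp add: norm_divide norm_mult divide_le_eq)
  then show ?thesis
    by (simp add: disc_D_def theta_def u_def dist_norm norm_minus_commute)
qed

lemma norm_theta_diff:
  assumes "0 \<le> Re w1" "0 \<le> Re w2" "1 \<le> Re b"
  shows "cmod (theta b w1 - theta b w2) = cmod (w1 - w2) / (cmod (w1 + b) * cmod (w2 + b))"
proof -
  have "w1 + b \<noteq> 0" "w2 + b \<noteq> 0" using norm_add_ge_1 assms by fastforce+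
  then have "theta b w1 - theta b w2 = (w2 - w1) / ((w1 + b) * (w2 + b))"
    by (simp add: theta_def field_simps)
  then show ?thesis by (simp add: norm_divide norm_mult norm_minus_commute)
qed

text \<open>A single map \<open>theta b\<close> need not contract the right half-plane, but two of them contract
  it by the factor \<open>1/4\<close>: the product of the two derivative moduli is at least 2.\<close>

lemma norm_add_theta_mult_ge_2:
  assumes "0 \<le> Re w" "1 \<le> Re b" "1 \<le> Re b'"
  shows "2 \<le> cmod (w + b) * cmod (theta b w + b')"
proof -
  define c where "c = cmod (w + b)"
  have Re_c: "1 \<le> Re (w + b)" using assms by simp
  then have c: "1 \<le> c" using complex_Re_le_cmod[of "w + b"] by (simp add: c_def)
  have "1 / c^2 \<le> Re (w + b) / c^2" using Re_c by (simp add: divide_right_mono)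
  also have "\<dots> = Re (theta b w)" by (simp add: theta_def Re_divide cmod_power2 c_def)
  finally have "1 / c^2 + 1 \<le> cmod (theta b w + b')"
    using complex_Re_le_cmod[of "theta b w + b'"] assms(3) by simp
  moreover have "2 \<le> c * (1 / c^2 + 1)"
  proof -
    have "2 * c \<le> c^2 + 1" using zero_le_power2[of "c - 1"] by (simp add: power2_eq_square algebra_simps)
    moreover have "c * (1 / c^2 + 1) = (c^2 + 1) / c" using c by (simp add: field_simps power2_eq_square)
    ultimately show ?thesis using c by (simp add: le_divide_eq)
  qed
  ultimately show ?thesis
    using mult_left_mono[of "1 / c^2 + 1" "cmod (theta b w + b')" c] c by (simp add: c_def)
qed

lemma norm_theta_theta_diff_le:
  assumes "0 \<le> Re w1" "0 \<le> Re w2" "1 \<le> Re b" "1 \<le> Re b'"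
  shows "cmod (theta b' (theta b w1) - theta b' (theta b w2)) \<le> cmod (w1 - w2) / 4"
proof -
  define u1 u2 where "u1 = theta b w1" and "u2 = theta b w2"
  define P where "P = (cmod (w1 + b) * cmod (u1 + b')) * (cmod (w2 + b) * cmod (u2 + b'))"
  have Re_u: "0 \<le> Re u1" "0 \<le> Re u2"
    using theta_in_disc_D disc_D_Re assms by (auto simp: u1_def u2_def)
  have "2 \<le> cmod (w1 + b) * cmod (u1 + b')" "2 \<le> cmod (w2 + b) * cmod (u2 + b')"
    using norm_add_theta_mult_ge_2 assms by (auto simp: u1_def u2_def)
  then have "2 * 2 \<le> P" unfolding P_def by (intro mult_mono) auto
  then have P: "4 \<le> P" by simp
  have "cmod (theta b' u1 - theta b' u2) = cmod (w1 - w2) / P"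
    using norm_theta_diff[OF Re_u assms(4)] norm_theta_diff[OF assms(1-3)]
    by (simp add: u1_def u2_def P_def field_simps)
  also have "\<dots> \<le> cmod (w1 - w2) / 4"
    by (rule divide_left_mono[OF P]) (use P in auto)
  finally show ?thesis by (simp add: u1_def u2_def)
qed

section \<open>A gauge for the logarithm of the eigenfunction\<close>

text \<open>Among these kernels (\<open>Re p \<le> -1\<close>) is the weight \<open>|w + b|^(-2s)\<close> of the eigen-equation (\<open>p = -b\<close>),
  and composing a kernel with \<open>theta b\<close> and multiplying by that weight yields the kernel with pole
  \<open>1/p - b\<close>. Hence the supremum \<open>kernel_gauge\<close> of the log-ratios decreases along the iteration.\<close>

definition log_kernel_ratio :: "real \<Rightarrow> complex \<Rightarrow> complex \<Rightarrow> complex \<Rightarrow> real" where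
  "log_kernel_ratio s p w1 w2 = 2 * s * (ln (cmod (w2 - p)) - ln (cmod (w1 - p)))"

definition kernel_gauge :: "real \<Rightarrow> complex \<Rightarrow> complex \<Rightarrow> real" where
  "kernel_gauge s w1 w2 = max 0 (SUP p\<in>{p. Re p \<le> -1}. log_kernel_ratio s p w1 w2)"

lemma log_kernel_ratio_le:
  assumes "0 \<le> Re w1" "0 \<le> Re w2" "Re p \<le> -1" "0 \<le> s"
  shows "log_kernel_ratio s p w1 w2 \<le> 2 * s * cmod (w1 - w2)"
proof -
  have p1: "1 \<le> cmod (w1 - p)" using assms complex_Re_le_cmod[of "w1 - p"] by simp
  have p2: "1 \<le> cmod (w2 - p)" using assms complex_Re_le_cmod[of "w2 - p"] by simp
  have pos: "0 < cmod (w2 - p)" "0 < cmod (w1 - p)" using p1 p2 by linarith+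
  then have "ln (cmod (w2 - p)) - ln (cmod (w1 - p)) = ln (cmod (w2 - p) / cmod (w1 - p))"
    by (rule ln_divide_pos[symmetric])
  also have "\<dots> \<le> cmod (w2 - p) / cmod (w1 - p) - 1"
    using p1 p2 by (intro ln_le_minus_one divide_pos_pos) linarith+
  also have "\<dots> = (cmod (w2 - p) - cmod (w1 - p)) / cmod (w1 - p)"
    using pos by (simp add: diff_divide_distrib)
  also have "\<dots> \<le> cmod (w1 - w2) / cmod (w1 - p)"
    using p1 norm_triangle_ineq[of "w1 - p" "w2 - w1"]
    by (intro divide_right_mono) (auto simp: norm_minus_commute)
  also have "\<dots> \<le> cmod (w1 - w2)"
    using p1 by (simp add: divide_le_eq mult_le_cancel_left1)
  finally show ?thesis unfolding log_kernel_ratio_def using assms(4) by (simp add: mult_left_mono)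
qed

lemma log_kernel_ratio_le_kernel_gauge:
  assumes "0 \<le> Re w1" "0 \<le> Re w2" "Re p \<le> -1" "0 \<le> s"
  shows "log_kernel_ratio s p w1 w2 \<le> kernel_gauge s w1 w2"
proof -
  have "bdd_above ((\<lambda>p. log_kernel_ratio s p w1 w2) ` {p. Re p \<le> -1})"
    using log_kernel_ratio_le assms unfolding bdd_above_def by blast
  then have "log_kernel_ratio s p w1 w2 \<le> (SUP p\<in>{p. Re p \<le> -1}. log_kernel_ratio s p w1 w2)"
    using assms(3) by (intro cSUP_upper) auto
  then show ?thesis unfolding kernel_gauge_def by simp
qed

lemma kernel_gauge_nonneg: "0 \<le> kernel_gauge s w1 w2"
  by (simp add: kernel_gauge_def)

lemma kernel_gauge_0_le:
  assumes "0 \<le> Re w" "0 \<le> s"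
  shows "kernel_gauge s 0 w \<le> 2 * s * cmod w"
proof -
  have "(SUP p\<in>{p. Re p \<le> -1}. log_kernel_ratio s p 0 w) \<le> 2 * s * cmod (0 - w)"
    using log_kernel_ratio_le[of 0 w _ s] assms by (intro cSUP_least) (auto intro: exI[of _ "-1"])
  then show ?thesis unfolding kernel_gauge_def using assms by simp
qed

lemma Re_inverse_minus_le:
  assumes "Re p \<le> -1" "1 \<le> Re b" shows "Re (1/p - b) \<le> -1"
proof -
  have "Re (1/p) \<le> 0" using assms(1) by (simp add: Re_divide divide_nonpos_nonneg)
  then show ?thesis using assms(2) by simp
qed

lemma log_kernel_ratio_theta:
  assumes "0 \<le> Re w1" "0 \<le> Re w2" "1 \<le> Re b" "Re p \<le> -1"
  shows "log_kernel_ratio s (-b) w1 w2 + log_kernel_ratio s p (theta b w1) (theta b w2)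
    = log_kernel_ratio s (1/p - b) w1 w2"
proof -
  have p: "p \<noteq> 0" using assms(4) by auto
  have q: "0 < cmod (w1 - (1/p - b))" "0 < cmod (w2 - (1/p - b))"
    using assms Re_inverse_minus_le[of p b]
      complex_Re_le_cmod[of "w1 - (1/p - b)"] complex_Re_le_cmod[of "w2 - (1/p - b)"]
    by auto
  have wb: "w1 + b \<noteq> 0" "w2 + b \<noteq> 0" using norm_add_ge_1 assms by fastforce+
  have "theta b w - p = - p * (w - (1/p - b)) / (w + b)" if "w + b \<noteq> 0" for w
  proof -
    have "theta b w - p = (1 - p * (w + b)) / (w + b)" using that by (simp add: theta_def field_simps)
    also have "1 - p * (w + b) = - p * (w - (1/p - b))" using p by (simp add: field_simps)
    finally show ?thesis .
  qed
  then have "cmod (theta b w1 - p) = cmod p * cmod (w1 - (1/p - b)) / cmod (w1 + b)"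
    "cmod (theta b w2 - p) = cmod p * cmod (w2 - (1/p - b)) / cmod (w2 + b)"
    using wb by (simp_all add: norm_divide norm_mult)
  then show ?thesis
    using p q wb by (simp add: log_kernel_ratio_def ln_div ln_mult algebra_simps)
qed

lemma kernel_gauge_theta:
  assumes "0 \<le> Re w1" "0 \<le> Re w2" "1 \<le> Re b" "0 \<le> s"
  shows "log_kernel_ratio s (-b) w1 w2 + kernel_gauge s (theta b w1) (theta b w2)
    \<le> kernel_gauge s w1 w2"
proof -
  have "log_kernel_ratio s (-b) w1 w2 \<le> kernel_gauge s w1 w2"
    using assms by (intro log_kernel_ratio_le_kernel_gauge) auto
  moreover have "(SUP p\<in>{p. Re p \<le> -1}. log_kernel_ratio s p (theta b w1) (theta b w2))
      \<le> kernel_gauge s w1 w2 - log_kernel_ratio s (-b) w1 w2"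
  proof (rule cSUP_least)
    fix p assume "p \<in> {p. Re p \<le> -1}"
    then have p: "Re p \<le> -1" by simp
    then have "Re (1/p - b) \<le> -1" using assms(3) by (rule Re_inverse_minus_le)
    then show "log_kernel_ratio s p (theta b w1) (theta b w2)
        \<le> kernel_gauge s w1 w2 - log_kernel_ratio s (-b) w1 w2"
      using log_kernel_ratio_theta[OF assms(1-3) p, of s]
        log_kernel_ratio_le_kernel_gauge[OF assms(1,2) _ assms(4)] by fastforce
  qed (auto intro: exI[of _ "-1"])
  ultimately show ?thesis unfolding kernel_gauge_def[of s "theta b w1"] by (simp add: max_def)
qed

lemma not_has_sum_of_infinite_ge_pos:
  fixes f :: "'a \<Rightarrow> real"
  assumes "infinite A" "\<And>a. a \<in> A \<Longrightarrow> c \<le> f a" "0 < c"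
  shows "\<not> (f has_sum S) A"
proof
  assume S: "(f has_sum S) A"
  obtain n :: nat where n: "S < real n * c" using reals_Archimedean3[OF assms(3)] by blast
  obtain F where F: "finite F" "card F = n" "F \<subseteq> A" using infinite_arbitrarily_large[OF assms(1)] by blast
  have "real n * c \<le> sum f F" using F assms(2) sum_bounded_below[of F c f] by auto
  also have "\<dots> \<le> S"
    using F assms(2,3) by (intro finite_sum_le_has_sum[OF S]) (auto intro: order_trans[OF less_imp_le])
  finally show False using n by simp
qed

section \<open>Lower bounds for the eigenfunction\<close>

text \<open>Only the restriction of the eigenfunction to \<open>D\<close> is used: every \<open>theta b\<close> maps the half-plane
  \<open>Re w \<ge> 0\<close>, and hence \<open>D\<close>, into \<open>D\<close>.\<close>

locale eigenfunction =
  fixes B :: "complex set" and s :: real and v :: "complex \<Rightarrow> real" and lam :: real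
  assumes B_Re: "\<And>b. b \<in> B \<Longrightarrow> 1 \<le> Re b"
    and B_infinite: "infinite B"
    and v_pos: "\<And>z. z \<in> disc_D \<Longrightarrow> 0 < v z"
    and v_cont: "continuous_on disc_D v"
    and eigen: "\<And>z. z \<in> disc_D \<Longrightarrow>
      ((\<lambda>b. cmod (z + b) powr (-2 * s) * v (theta b z)) has_sum (lam * v z)) B"
begin

lemma summand_pos:
  assumes "z \<in> disc_D" "b \<in> B"
  shows "0 < cmod (z + b) powr (-2 * s) * v (theta b z)"
  using norm_add_ge_1 v_pos theta_in_disc_D disc_D_Re(1)[OF assms(1)] B_Re[OF assms(2)]
  by (metis mult_pos_pos not_one_le_zero powr_gt_zero)

text \<open>If \<open>s \<le> 0\<close>, the summands at \<open>0\<close> are bounded below by \<open>min v > 0\<close>, so the infinite sum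
  diverges.\<close>

lemma exponent_pos: "0 < s"
proof (rule ccontr)
  assume "\<not> 0 < s"
  then have s: "0 \<le> -2 * s" by simp
  have "compact disc_D" "(0::complex) \<in> disc_D" by (simp_all add: disc_D_def)
  then obtain x0 where x0: "x0 \<in> disc_D" "\<And>y. y \<in> disc_D \<Longrightarrow> v x0 \<le> v y"
    using continuous_attains_inf[OF _ _ v_cont] by blast
  have "v x0 \<le> cmod (0 + b) powr (-2 * s) * v (theta b 0)" if b: "b \<in> B" for b
  proof -
    have "1 \<le> cmod (0 + b) powr (-2 * s)"
      using ge_one_powr_ge_zero[OF _ s] norm_add_ge_1[of 0 b] B_Re[OF b] by simp
    moreover have "v x0 \<le> v (theta b 0)" using x0 theta_in_disc_D[of 0 b] B_Re[OF b] by simp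
    ultimately show ?thesis using v_pos[OF x0(1)] mult_mono[of 1 _ "v x0"] by fastforce
  qed
  then have "\<not> ((\<lambda>b. cmod (0 + b) powr (-2 * s) * v (theta b 0)) has_sum (lam * v 0)) B"
    by (intro not_has_sum_of_infinite_ge_pos[OF B_infinite _ v_pos[OF x0(1)]])
  then show False using eigen[OF \<open>0 \<in> disc_D\<close>] by blast
qed

lemma eigenvalue_pos: "0 < lam"
proof -
  obtain b0 where b0: "b0 \<in> B" using B_infinite by (metis finite.emptyI ex_in_conv)
  define z :: complex where "z = 1/2"
  have z: "z \<in> disc_D" by (simp add: disc_D_def z_def)
  define f where "f = (\<lambda>b. cmod (z + b) powr (-2 * s) * v (theta b z))"
  have "0 < f b0" using summand_pos[OF z b0] by (simp add: f_def)
  also have "f b0 = sum f {b0}" by simp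
  also have "\<dots> \<le> lam * v z"
    by (rule has_sum_mono2[OF has_sum_finite[of "{b0}" f] eigen[OF z, folded f_def]])
      (use b0 summand_pos[OF z] in \<open>auto simp: f_def less_imp_le\<close>)
  finally show ?thesis using v_pos[OF z] by (simp add: zero_less_mult_iff)
qed

lemma ln_v_diff_le_of_theta:
  assumes w1: "w1 \<in> disc_D" and w2: "w2 \<in> disc_D"
    and le: "\<And>b. b \<in> B \<Longrightarrow>
      ln (v (theta b w1)) - ln (v (theta b w2)) \<le> K - log_kernel_ratio s (-b) w1 w2"
  shows "ln (v w1) - ln (v w2) \<le> K"
proof -
  have "cmod (w1 + b) powr (-2 * s) * v (theta b w1)
      \<le> exp K * (cmod (w2 + b) powr (-2 * s) * v (theta b w2))" if b: "b \<in> B" for b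
  proof -
    define a1 a2 t1 t2 where "a1 = cmod (w1 + b)" and "a2 = cmod (w2 + b)"
      and "t1 = v (theta b w1)" and "t2 = v (theta b w2)"
    have a: "a1 \<noteq> 0" "a2 \<noteq> 0"
      using norm_add_ge_1 disc_D_Re(1) w1 w2 B_Re[OF b] by (fastforce simp: a1_def a2_def)+
    have t: "0 < t1" "0 < t2"
      using v_pos theta_in_disc_D disc_D_Re(1) w1 w2 B_Re[OF b] by (auto simp: t1_def t2_def)
    have "ln t1 - ln t2 \<le> K - 2 * s * (ln a2 - ln a1)"
      using le[OF b] by (simp add: log_kernel_ratio_def a1_def a2_def t1_def t2_def)
    then have "exp (-2 * s * ln a1 + ln t1) \<le> exp (K + (-2 * s * ln a2 + ln t2))"
      by (simp add: algebra_simps)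
    moreover have "a1 powr (-2 * s) * t1 = exp (-2 * s * ln a1 + ln t1)"
      "exp K * (a2 powr (-2 * s) * t2) = exp (K + (-2 * s * ln a2 + ln t2))"
      using a t by (simp_all only: powr_def exp_add exp_ln if_False)
    ultimately show ?thesis by (simp add: a1_def a2_def t1_def t2_def)
  qed
  then have "lam * v w1 \<le> exp K * (lam * v w2)"
    by (intro has_sum_mono[OF eigen[OF w1] has_sum_cmult_right[OF eigen[OF w2]]])
  then have "v w1 \<le> exp K * v w2" using eigenvalue_pos by (simp add: algebra_simps)
  then have "ln (v w1) \<le> ln (exp K * v w2)" using v_pos[OF w1] by simp
  then show ?thesis using v_pos[OF w2] by (simp add: ln_mult)
qed

lemma ln_v_diff_le_kernel_gauge_scaled:
  assumes close: "\<And>w1 w2. w1 \<in> disc_D \<Longrightarrow> w2 \<in> disc_D \<Longrightarrow> cmod (w1 - w2) < \<delta> \<Longrightarrow>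
      ln (v w1) - ln (v w2) \<le> kernel_gauge s w1 w2 + \<epsilon>"
  shows "w1 \<in> disc_D \<Longrightarrow> w2 \<in> disc_D \<Longrightarrow> cmod (w1 - w2) < \<delta> * 4^n \<Longrightarrow>
      ln (v w1) - ln (v w2) \<le> kernel_gauge s w1 w2 + \<epsilon>"
proof (induction n arbitrary: w1 w2)
  case 0
  then show ?case using close by simp
next
  case (Suc n)
  have Re_w: "0 \<le> Re w1" "0 \<le> Re w2" using disc_D_Re Suc.prems by auto
  show ?case
  proof (rule ln_v_diff_le_of_theta[OF Suc.prems(1,2)])
    fix b assume b: "b \<in> B"
    define u1 u2 where "u1 = theta b w1" and "u2 = theta b w2"
    have u: "u1 \<in> disc_D" "u2 \<in> disc_D"
      using theta_in_disc_D Re_w B_Re[OF b] by (auto simp: u1_def u2_def)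
    have Re_u: "0 \<le> Re u1" "0 \<le> Re u2" using disc_D_Re u by auto
    have "ln (v u1) - ln (v u2) \<le> kernel_gauge s u1 u2 + \<epsilon>"
    proof (rule ln_v_diff_le_of_theta[OF u])
      fix b' assume b': "b' \<in> B"
      have "cmod (theta b' u1 - theta b' u2) \<le> cmod (w1 - w2) / 4"
        using norm_theta_theta_diff_le[OF Re_w B_Re[OF b] B_Re[OF b']] by (simp add: u1_def u2_def)
      also have "\<dots> < \<delta> * 4^n" using Suc.prems(3) by simp
      finally have "ln (v (theta b' u1)) - ln (v (theta b' u2))
          \<le> kernel_gauge s (theta b' u1) (theta b' u2) + \<epsilon>"
        using Suc.IH theta_in_disc_D Re_u B_Re[OF b'] by blast
      then show "ln (v (theta b' u1)) - ln (v (theta b' u2))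
          \<le> kernel_gauge s u1 u2 + \<epsilon> - log_kernel_ratio s (-b') u1 u2"
        using kernel_gauge_theta[OF Re_u B_Re[OF b'] less_imp_le[OF exponent_pos]] by linarith
    qed
    then show "ln (v (theta b w1)) - ln (v (theta b w2))
        \<le> kernel_gauge s w1 w2 + \<epsilon> - log_kernel_ratio s (-b) w1 w2"
      using kernel_gauge_theta[OF Re_w B_Re[OF b] less_imp_le[OF exponent_pos]]
      unfolding u1_def u2_def by linarith
  qed
qed

lemma ln_v_diff_le_kernel_gauge:
  assumes w1: "w1 \<in> disc_D" and w2: "w2 \<in> disc_D"
  shows "ln (v w1) - ln (v w2) \<le> kernel_gauge s w1 w2"
proof (rule field_le_epsilon)
  fix \<epsilon> :: real assume "0 < \<epsilon>"
  have "continuous_on disc_D (\<lambda>z. ln (v z))"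
    using v_pos by (intro continuous_on_ln[OF v_cont]) force
  then have "uniformly_continuous_on disc_D (\<lambda>z. ln (v z))"
    by (intro compact_uniformly_continuous) (auto simp: disc_D_def)
  then obtain \<delta> where "0 < \<delta>" and \<delta>: "\<And>x x'. x \<in> disc_D \<Longrightarrow> x' \<in> disc_D \<Longrightarrow> dist x' x < \<delta> \<Longrightarrow>
      dist (ln (v x')) (ln (v x)) < \<epsilon>"
    using \<open>0 < \<epsilon>\<close> unfolding uniformly_continuous_on_def by metis
  have close: "ln (v w1) - ln (v w2) \<le> kernel_gauge s w1 w2 + \<epsilon>"
    if "w1 \<in> disc_D" "w2 \<in> disc_D" "cmod (w1 - w2) < \<delta>" for w1 w2
    using \<delta>[OF that(2,1)] that(3) kernel_gauge_nonneg[of s w1 w2]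
    by (simp add: dist_norm dist_real_def)
  obtain n where "1 / \<delta> < 4 ^ n" using real_arch_pow[of 4 "1/\<delta>"] by auto
  then have "1 < \<delta> * 4^n" using \<open>0 < \<delta>\<close> by (simp add: field_simps)
  then have "cmod (w1 - w2) < \<delta> * 4^n" using disc_D_diameter[OF w1 w2] by linarith
  then show "ln (v w1) - ln (v w2) \<le> kernel_gauge s w1 w2 + \<epsilon>"
    using ln_v_diff_le_kernel_gauge_scaled[OF close w1 w2] by blast
qed

lemma v_lower_bound:
  assumes w: "w \<in> disc_D"
  shows "exp (- (2 * s * cmod w)) * v 0 \<le> v w"
proof -
  have "(0::complex) \<in> disc_D" by (simp add: disc_D_def)
  have "ln (v 0) - ln (v w) \<le> kernel_gauge s 0 w"
    by (rule ln_v_diff_le_kernel_gauge[OF \<open>0 \<in> disc_D\<close> w])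
  also have "\<dots> \<le> 2 * s * cmod w"
    using disc_D_Re[OF w] exponent_pos by (intro kernel_gauge_0_le) auto
  finally have "v 0 \<le> exp (2 * s * cmod w + ln (v w))"
    using v_pos[OF \<open>0 \<in> disc_D\<close>] by (metis add.commute diff_le_eq exp_le_cancel_iff exp_ln)
  then show ?thesis using v_pos[OF w] by (simp add: exp_add exp_minus field_simps)
qed

end

lemma norm_sq_minus_norm_le_norm_add_sq:
  assumes "0 \<le> Re z" "\<bar>Im z\<bar> \<le> 1/2" "0 \<le> Re b"
  shows "(cmod b)^2 - cmod b \<le> (cmod (z + b))^2"
proof -
  have "(Re b)^2 \<le> (Re z + Re b)^2" using assms by (intro power_mono) auto
  moreover have "(Im b)^2 - \<bar>Im b\<bar> \<le> (Im z + Im b)^2"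
  proof -
    have "\<bar>2 * Im z * Im b\<bar> \<le> \<bar>Im b\<bar>"
      using mult_right_mono[OF assms(2) abs_ge_zero[of "Im b"]] by (simp add: abs_mult)
    moreover have "(Im z + Im b)^2 = (Im z)^2 + 2 * Im z * Im b + (Im b)^2"
      by (simp add: power2_eq_square algebra_simps)
    ultimately show ?thesis using zero_le_power2[of "Im z"] by linarith
  qed
  moreover have "\<bar>Im b\<bar> \<le> cmod b" by (rule abs_Im_le_cmod)
  ultimately show ?thesis by (simp add: cmod_power2)
qed

lemma norm_theta_le:
  assumes "0 \<le> Re z" "\<bar>Im z\<bar> \<le> 1/2" "0 \<le> Re b" "1 < R" "R \<le> cmod b"
  shows "cmod (theta b z) \<le> 1 / sqrt (R^2 - R)"
proof -
  have "0 \<le> (cmod b - R) * (cmod b + R - 1)" using assms(4,5) by (intro mult_nonneg_nonneg) auto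
  then have "R^2 - R \<le> (cmod (z + b))^2"
    using norm_sq_minus_norm_le_norm_add_sq[OF assms(1-3)] by (simp add: power2_eq_square algebra_simps)
  then have "sqrt (R^2 - R) \<le> cmod (z + b)" by (intro real_le_lsqrt) auto
  moreover have "0 < sqrt (R^2 - R)" using assms(4) by (simp add: power2_eq_square)
  ultimately have "1 / cmod (z + b) \<le> 1 / sqrt (R^2 - R)"
    by (intro divide_left_mono mult_pos_pos) auto
  then show ?thesis by (simp add: theta_def norm_divide)
qed

lemma norm_le_sqrt5_half:
  assumes "0 \<le> Re z" "Re z \<le> 1" "\<bar>Im z\<bar> \<le> 1/2"
  shows "cmod z \<le> sqrt 5 / 2"
proof (rule real_le_rsqrt[of "cmod z", THEN order_trans])
  have "(Re z)^2 \<le> 1" using assms by (simp add: power_le_one)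
  moreover have "\<bar>Im z\<bar>^2 \<le> (1/2)^2" using assms(3) by (intro power_mono) auto
  ultimately show "(cmod z)^2 \<le> 5/4" by (simp add: cmod_power2 power_divide)
  show "sqrt (5/4) \<le> sqrt 5 / 2" by (simp add: real_sqrt_divide)
qed

text \<open>The base of the power in \<open>CRs\<close> is the square \<open>(R / (R + sqrt 5 / 2))^2\<close>, where \<open>sqrt 5 / 2\<close>
  bounds \<open>cmod z\<close> on the rectangle containing \<open>closure U\<close>.\<close>

lemma CRs_base_eq:
  assumes "0 < R"
  shows "R / (R + sqrt 5 + 5 / (4 * R)) = (R / (R + sqrt 5 / 2))^2"
proof -
  have "(R + sqrt 5 / 2)^2 = R * (R + sqrt 5 + 5 / (4 * R))"
    using assms by (simp add: power2_eq_square field_simps)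
  moreover have "0 < R + sqrt 5 + 5 / (4 * R)" using assms by (simp add: add_pos_nonneg)
  ultimately show ?thesis using assms by (simp add: power_divide power2_eq_square)
qed

lemma CRs_pos:
  assumes "0 < R" shows "0 < CRs R s"
proof -
  have "0 < R / (R + sqrt 5 + 5 / (4 * R))" using assms by (simp add: add_pos_nonneg)
  then have "0 < (R / (R + sqrt 5 + 5 / (4 * R))) powr s" by (simp only: powr_gt_zero)
  then show ?thesis unfolding CRs_def by (intro mult_pos_pos) simp_all
qed

lemma CRs_base_powr_le:
  assumes "0 < R" "R \<le> r" "0 \<le> s"
  shows "(R / (R + sqrt 5 + 5 / (4 * R))) powr s \<le> (r / (r + sqrt 5 / 2)) powr (2 * s)"
proof -
  define c where "c = sqrt 5 / 2"
  define q where "q = r / (r + c)"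
  have c: "0 \<le> c" by (simp add: c_def)
  have q: "0 < q" using assms c by (simp add: q_def)
  have "R / (R + c) \<le> q"
  proof -
    have "R * (r + c) \<le> r * (R + c)"
      using mult_right_mono[OF assms(2) c] by (simp add: algebra_simps)
    then show ?thesis using assms c by (simp add: q_def divide_le_eq le_divide_eq mult.commute)
  qed
  then have "(R / (R + c))^2 \<le> q^2"
    using assms(1) c by (intro power_mono) auto
  then have "(R / (R + sqrt 5 + 5 / (4 * R))) powr s \<le> (q^2) powr s"
    using CRs_base_eq[OF assms(1)] assms c unfolding c_def by (intro powr_mono2) auto
  also have "(q^2) powr s = q powr (2 * s)"
  proof -
    have "q^2 = q powr 2" using q by (simp add: powr_realpow)
    then show ?thesis by (simp add: powr_powr)
  qed
  finally show ?thesis by (simp add: q_def c_def)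
qed

lemma weight_comparison:
  assumes "0 \<le> Re z" "Re z \<le> 1" "\<bar>Im z\<bar> \<le> 1/2" "1 \<le> Re b" "0 < R" "R \<le> cmod b" "0 \<le> s"
  shows "(R / (R + sqrt 5 + 5 / (4 * R))) powr s * (1 / cmod b powr (2 * s))
    \<le> 1 / cmod (z + b) powr (2 * s)"
proof -
  define q where "q = cmod b / (cmod b + sqrt 5 / 2)"
  have "0 < cmod b" using assms(5,6) by linarith
  then have b: "0 < cmod b" "0 < cmod b + sqrt 5 / 2" by (simp_all add: add_pos_nonneg)
  have "(R / (R + sqrt 5 + 5 / (4 * R))) powr s * cmod (z + b) powr (2 * s)
      \<le> q powr (2 * s) * cmod (z + b) powr (2 * s)"
    using CRs_base_powr_le[OF assms(5-7)] by (intro mult_right_mono) (auto simp: q_def)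
  also have "\<dots> \<le> q powr (2 * s) * (cmod b + sqrt 5 / 2) powr (2 * s)"
    using norm_triangle_ineq[of z b] norm_le_sqrt5_half[OF assms(1-3)] assms(7)
    by (intro mult_left_mono powr_mono2) auto
  also have "\<dots> = cmod b powr (2 * s)"
    using b by (simp add: q_def powr_mult[symmetric])
  finally have "(R / (R + sqrt 5 + 5 / (4 * R))) powr s * cmod (z + b) powr (2 * s)
      \<le> cmod b powr (2 * s)" .
  moreover have "0 < cmod (z + b) powr (2 * s)" "0 < cmod b powr (2 * s)"
    using b norm_add_ge_1[OF assms(1,4)] by auto
  ultimately show ?thesis by (simp add: field_simps)
qed

lemma summable_on_tail_of_has_sum:
  assumes "((\<lambda>b. cmod (z + b) powr (-2 * s) * v (theta b z)) has_sum S) B"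
  shows "(\<lambda>b. v (theta b z) / cmod (z + b) powr (2 * s)) summable_on {b\<in>B. R < cmod b}"
proof -
  have "(\<lambda>b. v (theta b z) / cmod (z + b) powr (2 * s)) summable_on B"
    using assms by (auto simp: summable_on_def powr_minus_divide)
  then show ?thesis by (rule summable_on_subset_banach) auto
qed

context eigenfunction
begin

lemma summand_lower_bound:
  assumes z: "0 \<le> Re z" "Re z \<le> 1" "\<bar>Im z\<bar> \<le> 1/2" and b: "b \<in> B" and R: "2 < R" "R < cmod b"
  shows "CRs R s * v 0 * (1 / cmod b powr (2 * s)) \<le> v (theta b z) / cmod (z + b) powr (2 * s)"
proof -
  have w: "theta b z \<in> disc_D" using theta_in_disc_D z B_Re[OF b] by simp
  have "cmod (theta b z) \<le> 1 / sqrt (R^2 - R)"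
    using B_Re[OF b] R z by (intro norm_theta_le) auto
  then have "2 * s * cmod (theta b z) \<le> 2 * s * (1 / sqrt (R^2 - R))"
    using exponent_pos by (intro mult_left_mono) auto
  also have "\<dots> \<le> sqrt 5 * s * (1 / sqrt (R^2 - R))"
  proof -
    have "0 < R^2 - R" using R by (simp add: power2_eq_square)
    then show ?thesis using exponent_pos by (intro mult_right_mono) (auto simp: real_le_rsqrt)
  qed
  finally have "exp (- sqrt 5 * s / sqrt (R^2 - R)) \<le> exp (- (2 * s * cmod (theta b z)))" by simp
  moreover have "0 < v 0" using v_pos by (simp add: disc_D_def)
  ultimately have "exp (- sqrt 5 * s / sqrt (R^2 - R)) * v 0 \<le> exp (- (2 * s * cmod (theta b z))) * v 0"
    by (intro mult_right_mono) auto
  then have "exp (- sqrt 5 * s / sqrt (R^2 - R)) * v 0 \<le> v (theta b z)"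
    using v_lower_bound[OF w] by linarith
  moreover have "(R / (R + sqrt 5 + 5 / (4 * R))) powr s * (1 / cmod b powr (2 * s))
      \<le> 1 / cmod (z + b) powr (2 * s)"
    using z R B_Re[OF b] exponent_pos by (intro weight_comparison) auto
  ultimately have "(exp (- sqrt 5 * s / sqrt (R^2 - R)) * v 0)
      * ((R / (R + sqrt 5 + 5 / (4 * R))) powr s * (1 / cmod b powr (2 * s)))
      \<le> v (theta b z) * (1 / cmod (z + b) powr (2 * s))"
    using v_pos[OF w] by (intro mult_mono) auto
  moreover have "CRs R s * v 0 * (1 / cmod b powr (2 * s)) = (exp (- sqrt 5 * s / sqrt (R^2 - R)) * v 0)
      * ((R / (R + sqrt 5 + 5 / (4 * R))) powr s * (1 / cmod b powr (2 * s)))"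
    by (simp add: CRs_def)
  ultimately show ?thesis by (simp only: times_divide_eq_right mult_1_right)
qed

lemma summable_on_tail_powr:
  assumes "2 < R"
  shows "(\<lambda>b. 1 / cmod b powr (2 * s)) summable_on {b\<in>B. R < cmod b}"
proof -
  have C: "0 < CRs R s * v 0" using CRs_pos v_pos assms by (simp add: disc_D_def)
  have "(\<lambda>b. (1 / (CRs R s * v 0)) * (v (theta b 0) / cmod (0 + b) powr (2 * s)))
      summable_on {b\<in>B. R < cmod b}"
    using summable_on_tail_of_has_sum[OF eigen[of 0]] by (intro summable_on_cmult_right) (simp add: disc_D_def)
  moreover have "1 / cmod b powr (2 * s) \<le> (1 / (CRs R s * v 0)) * (v (theta b 0) / cmod (0 + b) powr (2 * s))"
    if "b \<in> {b\<in>B. R < cmod b}" for b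
  proof -
    have "CRs R s * v 0 * (1 / cmod b powr (2 * s)) \<le> v (theta b 0) / cmod (0 + b) powr (2 * s)"
      using that assms by (intro summand_lower_bound) auto
    moreover have "\<And>K h g :: real. 0 < K \<Longrightarrow> K * h \<le> g \<Longrightarrow> h \<le> (1 / K) * g"
      by (simp add: pos_le_divide_eq mult.commute)
    ultimately show ?thesis using C by blast
  qed
  ultimately show ?thesis by (rule summable_on_comparison_test) auto
qed

lemma tail_sum_lower_bound:
  assumes z: "0 \<le> Re z" "Re z \<le> 1" "\<bar>Im z\<bar> \<le> 1/2" and R: "2 < R"
    and summable: "(\<lambda>b. v (theta b z) / cmod (z + b) powr (2 * s)) summable_on {b\<in>B. R < cmod b}"
    and c: "c \<le> (\<Sum>\<^sub>\<infinity>b\<in>{b\<in>B. R < cmod b}. 1 / cmod b powr (2 * s))"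
  shows "CRs R s * v 0 * c \<le> (\<Sum>\<^sub>\<infinity>b\<in>{b\<in>B. R < cmod b}. v (theta b z) / cmod (z + b) powr (2 * s))"
proof -
  have "CRs R s * v 0 * c \<le> CRs R s * v 0 * (\<Sum>\<^sub>\<infinity>b\<in>{b\<in>B. R < cmod b}. 1 / cmod b powr (2 * s))"
    using c CRs_pos[of R s] v_pos[of 0] R by (intro mult_left_mono) (auto simp: disc_D_def)
  also have "\<dots> = (\<Sum>\<^sub>\<infinity>b\<in>{b\<in>B. R < cmod b}. CRs R s * v 0 * (1 / cmod b powr (2 * s)))"
    by (rule infsum_cmult_right'[symmetric])
  also have "\<dots> \<le> (\<Sum>\<^sub>\<infinity>b\<in>{b\<in>B. R < cmod b}. v (theta b z) / cmod (z + b) powr (2 * s))"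
  proof (rule infsum_mono[OF summable_on_cmult_right[OF summable_on_tail_powr[OF R]] summable])
    fix b assume "b \<in> {b\<in>B. R < cmod b}"
    then show "CRs R s * v 0 * (1 / cmod b powr (2 * s)) \<le> v (theta b z) / cmod (z + b) powr (2 * s)"
      using summand_lower_bound[OF z _ R] by blast
  qed
  finally show ?thesis .
qed

end

section \<open>Lattice points in a quarter disc\<close>

definition circle_primitive :: "real \<Rightarrow> real \<Rightarrow> real" where
  "circle_primitive c y = (y * sqrt (c^2 - y^2) + c^2 * arcsin (y / c)) / 2"

lemma circle_primitive_has_derivative:
  assumes c: "0 < c" and y: "-c < y" "y < c"
  shows "(circle_primitive c has_real_derivative sqrt (c^2 - y^2)) (at y)"
proof -
  define P where "P = c^2 - y^2"
  have ay: "\<bar>y\<bar> < c" using y by auto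
  have "\<bar>y\<bar>^2 < c^2" using power_strict_mono[OF ay abs_ge_zero, of 2] by simp
  hence P: "0 < P" unfolding P_def by simp
  define q where "q = sqrt P"
  have q: "0 < q" using P by (simp add: q_def)
  have qq: "q^2 = P" using P by (simp add: q_def)
  have yc: "-1 < y / c" "y / c < 1" using c y by (simp_all add: field_simps)
  have d0: "((\<lambda>y. c^2 - y^2) has_real_derivative (- (2 * y))) (at y)"
    by (auto intro!: derivative_eq_intros)
  have d1: "((\<lambda>y. sqrt (c^2 - y^2)) has_real_derivative inverse (sqrt P) / 2 * (- (2 * y))) (at y)"
    using DERIV_chain2[where f=sqrt and g="\<lambda>y. c^2 - y^2", OF DERIV_real_sqrt[OF P[unfolded P_def]] d0]
    by (simp add: P_def)
  have d00: "((\<lambda>y. y / c) has_real_derivative (1 / c)) (at y)"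
    using c by (auto intro!: derivative_eq_intros)
  have d2: "((\<lambda>y. arcsin (y / c)) has_real_derivative inverse (sqrt (1 - (y/c)^2)) * (1 / c)) (at y)"
    using DERIV_chain2[where f=arcsin and g="\<lambda>y. y / c", OF DERIV_arcsin[OF yc] d00] by simp
  have e1: "((\<lambda>y. y * sqrt (c^2 - y^2)) has_real_derivative
      (1 * sqrt (c^2 - y^2) + (inverse (sqrt P) / 2 * (- (2 * y))) * y)) (at y)"
    using DERIV_mult[OF DERIV_ident d1] by simp
  have e2: "((\<lambda>y. c^2 * arcsin (y / c)) has_real_derivative
      c^2 * (inverse (sqrt (1 - (y/c)^2)) * (1 / c))) (at y)"
    using DERIV_cmult[OF d2] by simp
  have d: "(circle_primitive c has_real_derivative
      ((1 * sqrt (c^2 - y^2) + (inverse (sqrt P) / 2 * (- (2 * y))) * y) +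
        c^2 * (inverse (sqrt (1 - (y/c)^2)) * (1 / c))) / 2) (at y)"
    unfolding circle_primitive_def by (rule DERIV_cdivide[OF DERIV_add[OF e1 e2]])
  have s1: "sqrt (1 - (y/c)^2) = q / c"
  proof -
    have "1 - (y/c)^2 = P / c^2" using c by (simp add: P_def field_simps)
    thus ?thesis using c by (simp add: q_def real_sqrt_divide)
  qed
  let ?E = "((1 * sqrt (c^2 - y^2) + (inverse (sqrt P) / 2 * (- (2 * y))) * y) +
        c^2 * (inverse (sqrt (1 - (y/c)^2)) * (1 / c))) / 2"
  have "?E = (q - y^2 / q + c^2 / q) / 2"
    using c q unfolding s1 P_def[symmetric] q_def[symmetric] by (simp add: field_simps power2_eq_square)
  also have "\<dots> = q" using q qq by (simp add: P_def field_simps power2_eq_square)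
  finally have eqE: "?E = sqrt (c^2 - y^2)" by (simp add: q_def P_def)
  show ?thesis using d by (simp only: eqE)
qed

lemma continuous_on_circle_primitive: assumes "0 < c" "0 \<le> a" "b \<le> c" shows "continuous_on {a..b} (circle_primitive c)"
  unfolding circle_primitive_def using assms
  by (intro continuous_intros continuous_on_arcsin) (auto simp: field_simps)

lemma has_integral_circle_arc:
  assumes c: "0 < c" and ab: "0 \<le> a" "a \<le> b" "b \<le> c"
  shows "((\<lambda>y. sqrt (c^2 - y^2)) has_integral (circle_primitive c b - circle_primitive c a)) {a..b}"
proof (rule fundamental_theorem_of_calculus_interior[OF ab(2) continuous_on_circle_primitive[OF c ab(1,3)]])
  fix x assume "x \<in> {a<..<b}"
  hence "-c < x" "x < c" using ab c by auto
  thus "(circle_primitive c has_vector_derivative sqrt (c^2 - x^2)) (at x)"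
    using circle_primitive_has_derivative[OF c] by (simp add: has_real_derivative_iff_has_vector_derivative)
qed

lemma has_integral_quarter_circle:
  assumes c: "0 < c"
  shows "((\<lambda>y. sqrt (c^2 - y^2)) has_integral (pi / 4 * c^2)) {0..c}"
proof -
  have eq: "circle_primitive c c - circle_primitive c 0 = pi / 4 * c^2" using c by (simp add: circle_primitive_def)
  have "((\<lambda>y. sqrt (c^2 - y^2)) has_integral (circle_primitive c c - circle_primitive c 0)) {0..c}"
    using has_integral_circle_arc[OF c order.refl less_imp_le[OF c] order.refl] by simp
  thus ?thesis by (simp only: eq)
qed

text \<open>The closed form of the integral of \<open>sqrt (t^2 - y^2) - 1\<close> over \<open>[1, sqrt (t^2 - 1)]\<close>.\<close>

definition quarter_disc_count_lower :: "real \<Rightarrow> real" where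
  "quarter_disc_count_lower t = pi / 4 * t^2 - t^2 * arcsin (1 / t) - sqrt (t^2 - 1) + 1"

lemma has_integral_quarter_disc_count_lower:
  assumes t: "2 \<le> t^2" "0 < t"
  shows "((\<lambda>y. sqrt (t^2 - y^2) - 1) has_integral quarter_disc_count_lower t) {1..sqrt (t^2 - 1)}"
proof -
  define \<sigma> where "\<sigma> = sqrt (t^2 - 1)"
  have t1: "1 \<le> t" using power2_le_imp_le[of 1 t] t by simp
  have s1: "1 \<le> \<sigma>" using t by (simp add: \<sigma>_def)
  have st: "\<sigma> \<le> t" using t by (simp add: \<sigma>_def real_le_lsqrt real_sqrt_le_iff)
  have h: "((\<lambda>y. sqrt (t^2 - y^2)) has_integral (circle_primitive t \<sigma> - circle_primitive t 1)) {1..\<sigma>}"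
    by (rule has_integral_circle_arc) (use t s1 st in auto)
  have h2: "((\<lambda>y. 1) has_integral (\<sigma> - 1)) {1..\<sigma>}"
    using has_integral_const_real[of "1::real" 1 \<sigma>] s1 by simp
  have ss: "t^2 - \<sigma>^2 = 1" using t by (simp add: \<sigma>_def)
  have ar: "arcsin (\<sigma> / t) = pi / 2 - arcsin (1 / t)"
  proof -
    have "\<sigma> / t = sqrt (1 - (1/t)^2)" using t
      by (simp add: \<sigma>_def real_sqrt_divide[symmetric] field_simps power2_eq_square)
         (simp add: real_sqrt_divide)
    moreover have "arccos (1/t) = arcsin (sqrt (1 - (1/t)^2))"
      by (rule arccos_arcsin_sqrt_pos) (use t t1 in \<open>auto simp: field_simps\<close>)
    moreover have "arccos (1/t) = pi/2 - arcsin (1/t)"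
      by (rule arccos_arcsin_eq) (use t t1 in \<open>auto simp: field_simps\<close>)
    ultimately show ?thesis by simp
  qed
  have f1: "circle_primitive t \<sigma> = (\<sigma> + t^2 * (pi / 2 - arcsin (1 / t))) / 2"
    unfolding circle_primitive_def ss ar by simp
  have f2: "circle_primitive t 1 = (\<sigma> + t^2 * arcsin (1 / t)) / 2"
    unfolding circle_primitive_def by (simp add: \<sigma>_def)
  have val: "circle_primitive t \<sigma> - circle_primitive t 1 - (\<sigma> - 1) = quarter_disc_count_lower t"
    unfolding f1 f2 quarter_disc_count_lower_def by (simp add: \<sigma>_def[symmetric] field_simps)
  show ?thesis using has_integral_diff[OF h h2] val by (simp add: \<sigma>_def)
qed

definition row_count :: "real \<Rightarrow> nat \<Rightarrow> nat" where
  "row_count c n = card {m::nat. 1 \<le> m \<and> real m ^ 2 + real n ^ 2 \<le> c ^ 2}"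

lemma row_count_set:
  assumes c: "0 \<le> c" and n: "real n \<le> c"
  shows "{m::nat. 1 \<le> m \<and> real m ^ 2 + real n ^ 2 \<le> c ^ 2} = {1..nat \<lfloor>sqrt (c^2 - real n ^ 2)\<rfloor>}"
proof -
  define X where "X = sqrt (c^2 - real n ^ 2)"
  have "real n ^ 2 \<le> c^2" using c n by (intro power_mono) auto
  hence P: "0 \<le> c^2 - real n ^ 2" by simp
  have X: "0 \<le> X" using P by (simp add: X_def)
  have XX: "X^2 = c^2 - real n ^ 2" using P by (simp add: X_def)
  have eqv: "real m ^ 2 + real n ^ 2 \<le> c ^ 2 \<longleftrightarrow> m \<le> nat \<lfloor>X\<rfloor>" for m :: nat
  proof -
    have "real m ^ 2 + real n ^ 2 \<le> c ^ 2 \<longleftrightarrow> real m ^ 2 \<le> X^2" unfolding XX by linarith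
    also have "\<dots> \<longleftrightarrow> real m \<le> X" using X power_mono_iff[of "real m" X 2] by simp
    also have "\<dots> \<longleftrightarrow> m \<le> nat \<lfloor>X\<rfloor>" using X by (simp add: le_nat_iff le_floor_iff)
    finally show ?thesis .
  qed
  show ?thesis unfolding X_def[symmetric]
    by (rule set_eqI) (simp only: mem_Collect_eq atLeastAtMost_iff eqv)
qed

lemma row_count_bounds:
  assumes c: "0 \<le> c" and n: "real n \<le> c"
  shows "real (row_count c n) \<le> sqrt (c^2 - real n ^ 2)" "sqrt (c^2 - real n ^ 2) - 1 < real (row_count c n)"
proof -
  define X where "X = sqrt (c^2 - real n ^ 2)"
  have "real n ^ 2 \<le> c^2" using c n by (intro power_mono) auto
  hence P: "0 \<le> X" unfolding X_def by simp
  have fl: "0 \<le> \<lfloor>X\<rfloor>" using P by simp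
  have e: "real (row_count c n) = real_of_int \<lfloor>X\<rfloor>"
    unfolding row_count_def row_count_set[OF c n] X_def[symmetric] using fl by simp
  show "real (row_count c n) \<le> sqrt (c^2 - real n ^ 2)" unfolding e X_def[symmetric] by (rule of_int_floor_le)
  show "sqrt (c^2 - real n ^ 2) - 1 < real (row_count c n)" unfolding e X_def[symmetric] by linarith
qed

definition quarter_disc_points :: "real \<Rightarrow> (nat \<times> nat) set" where
  "quarter_disc_points c = {(m,n). 1 \<le> m \<and> 1 \<le> n \<and> real m ^ 2 + real n ^ 2 \<le> c ^ 2}"

lemma quarter_disc_points_Sigma:
  assumes c: "0 \<le> c"
  shows "quarter_disc_points c = (\<lambda>(n,m). (m,n)) `
    (SIGMA n:{1..nat \<lfloor>c\<rfloor>}. {m. 1 \<le> m \<and> real m ^ 2 + real n ^ 2 \<le> c ^ 2})"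
proof -
  have "real n \<le> c" if "1 \<le> m" "real m ^ 2 + real n ^ 2 \<le> c ^ 2" for m n :: nat
  proof -
    have "0 \<le> real m ^ 2" by simp
    hence "real n ^ 2 \<le> c^2" using that(2) by linarith
    thus ?thesis using c by (simp add: power_mono_iff abs_le_square_iff)
  qed
  hence "n \<le> nat \<lfloor>c\<rfloor>" if "1 \<le> m" "real m ^ 2 + real n ^ 2 \<le> c ^ 2" for m n :: nat
    using that by (simp add: le_nat_floor le_floor_iff)
  thus ?thesis unfolding quarter_disc_points_def by (auto simp: image_iff)
qed

lemma finite_row_points: "finite {m::nat. 1 \<le> m \<and> real m ^ 2 + real n ^ 2 \<le> c ^ 2}"
proof (rule finite_subset[of _ "{..nat \<lceil>\<bar>c\<bar>\<rceil>}"])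
  have bound: "real m \<le> \<bar>c\<bar>" if "real m ^ 2 + real n ^ 2 \<le> c ^ 2" for m
  proof -
    have "real m ^ 2 \<le> c ^ 2" using that zero_le_power2[of "real n"] by linarith
    then show ?thesis using abs_le_square_iff[of "real m" c] by simp
  qed
  show "{m::nat. 1 \<le> m \<and> real m ^ 2 + real n ^ 2 \<le> c ^ 2} \<subseteq> {..nat \<lceil>\<bar>c\<bar>\<rceil>}"
  proof
    fix m assume "m \<in> {m::nat. 1 \<le> m \<and> real m ^ 2 + real n ^ 2 \<le> c ^ 2}"
    then have "real m \<le> \<bar>c\<bar>" using bound by blast
    then have "real m \<le> real (nat \<lceil>\<bar>c\<bar>\<rceil>)" using of_nat_ceiling[of "\<bar>c\<bar>"] by linarith
    then show "m \<in> {..nat \<lceil>\<bar>c\<bar>\<rceil>}" by simp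
  qed
qed simp

lemma card_quarter_disc_points:
  assumes "0 \<le> c"
  shows "card (quarter_disc_points c) = (\<Sum>n\<in>{1..nat \<lfloor>c\<rfloor>}. row_count c n)"
proof -
  have inj: "inj_on (\<lambda>(n,m). (m,n)) X" for X :: "(nat \<times> nat) set" by (auto simp: inj_on_def)
  show ?thesis
    unfolding quarter_disc_points_Sigma[OF assms] card_image[OF inj] row_count_def
    by (rule card_SigmaI) (use finite_row_points in auto)
qed

lemma quarter_disc_points_mono: "R \<le> t \<Longrightarrow> 0 \<le> R \<Longrightarrow> quarter_disc_points R \<subseteq> quarter_disc_points t"
  unfolding quarter_disc_points_def by (auto intro: order_trans power_mono)

lemma finite_quarter_disc_points: "0 \<le> c \<Longrightarrow> finite (quarter_disc_points c)"
  unfolding quarter_disc_points_Sigma by (intro finite_imageI finite_SigmaI finite_row_points) auto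

lemma sum_integral_unit_intervals:
  fixes f :: "real \<Rightarrow> real"
  assumes cont: "continuous_on UNIV f"
  shows "(\<Sum>n\<in>{1..k}. integral {real n..real n + 1} f) = integral {1..real k + 1} f"
proof (induction k)
  case 0
  show ?case by simp
next
  case (Suc k)
  have i: "f integrable_on {1..real k + 2}"
    by (rule integrable_continuous_interval) (rule continuous_on_subset[OF cont], simp)
  have "(\<Sum>n\<in>{1..Suc k}. integral {real n..real n + 1} f)
      = integral {1..real k + 1} f + integral {real k + 1..real k + 2} f"
    using Suc by (simp add: add.commute)
  also have "\<dots> = integral {1..real k + 2} f"
    by (rule Henstock_Kurzweil_Integration.integral_combine) (use i in auto)
  finally show ?case by (simp add: add.commute)
qed

text \<open>On \<open>[n, n+1]\<close> this function stays below the number of lattice points in row \<open>n\<close> of the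
  quarter disc of radius \<open>t\<close>, so its integral bounds their number from below.\<close>

definition lowered_circle :: "real \<Rightarrow> real \<Rightarrow> real" where
  "lowered_circle t y = max 0 (sqrt (t^2 - y^2) - 1)"

lemma continuous_on_lowered_circle: "continuous_on UNIV (lowered_circle t)"
  unfolding lowered_circle_def by (intro continuous_intros)

lemma integral_lowered_circle_le_row_count:
  assumes "real n \<le> t"
  shows "integral {real n..real n + 1} (lowered_circle t) \<le> real (row_count t n)"
proof -
  have "integral {real n..real n + 1} (lowered_circle t) \<le> integral {real n..real n + 1} (\<lambda>y. real (row_count t n))"
  proof (rule integral_le)
    show "lowered_circle t integrable_on {real n..real n + 1}"
      by (rule integrable_continuous_interval) (rule continuous_on_subset[OF continuous_on_lowered_circle], simp)
    show "(\<lambda>y. real (row_count t n)) integrable_on {real n..real n + 1}"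
      by (rule integrable_continuous_interval) (rule continuous_intros)
  next
    fix y assume y: "y \<in> {real n..real n + 1}"
    have "real n ^ 2 \<le> y^2" using y by (intro power_mono) auto
    then have "sqrt (t^2 - y^2) \<le> sqrt (t^2 - real n ^ 2)" by simp
    then have "sqrt (t^2 - y^2) - 1 \<le> real (row_count t n)"
      using row_count_bounds(2)[of t n] assms by linarith
    then show "lowered_circle t y \<le> real (row_count t n)" unfolding lowered_circle_def by simp
  qed
  then show ?thesis by simp
qed

lemma has_integral_lowered_circle:
  assumes "2 \<le> t^2" "0 < t"
  shows "(lowered_circle t has_integral quarter_disc_count_lower t) {1..sqrt (t^2 - 1)}"
  using has_integral_quarter_disc_count_lower[OF assms]
proof (rule has_integral_eq[rotated])
  fix y assume y: "y \<in> {1..sqrt (t^2 - 1)}"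
  then have "y^2 \<le> (sqrt (t^2 - 1))^2" by (intro power_mono) auto
  then have "1 \<le> sqrt (t^2 - y^2)" using assms by simp
  then show "sqrt (t^2 - y^2) - 1 = lowered_circle t y" unfolding lowered_circle_def by simp
qed

lemma quarter_disc_count_lower_le_card:
  assumes t: "2 \<le> t^2" "0 < t"
  shows "quarter_disc_count_lower t \<le> real (card (quarter_disc_points t))"
proof -
  define N where "N = nat \<lfloor>t\<rfloor>"
  define \<sigma> where "\<sigma> = sqrt (t^2 - 1)"
  have t1: "1 \<le> t" using power2_le_imp_le[of 1 t] t by simp
  have "\<sigma> \<le> t" using t by (simp add: \<sigma>_def real_le_lsqrt)
  moreover have "t < real N + 1" using t1 by (simp add: N_def)
  ultimately have \<sigma>: "1 \<le> \<sigma>" "\<sigma> \<le> real N + 1" using t by (auto simp: \<sigma>_def)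
  have integrable: "lowered_circle t integrable_on {a..b}" for a b
    by (rule integrable_continuous_interval) (rule continuous_on_subset[OF continuous_on_lowered_circle], simp)
  have "quarter_disc_count_lower t = integral {1..\<sigma>} (lowered_circle t)"
    using has_integral_lowered_circle[OF t] by (simp add: \<sigma>_def integral_unique)
  also have "\<dots> \<le> integral {1..\<sigma>} (lowered_circle t) + integral {\<sigma>..real N + 1} (lowered_circle t)"
    using integrable by (simp add: integral_nonneg lowered_circle_def)
  also have "\<dots> = integral {1..real N + 1} (lowered_circle t)"
    using \<sigma> integrable by (intro Henstock_Kurzweil_Integration.integral_combine) auto
  also have "\<dots> = (\<Sum>n\<in>{1..N}. integral {real n..real n + 1} (lowered_circle t))"
    by (rule sum_integral_unit_intervals[OF continuous_on_lowered_circle, symmetric])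
  also have "\<dots> \<le> (\<Sum>n\<in>{1..N}. real (row_count t n))"
    using t1 by (intro sum_mono integral_lowered_circle_le_row_count) (auto simp: N_def le_nat_iff le_floor_iff)
  also have "\<dots> = real (card (quarter_disc_points t))" using t by (simp add: card_quarter_disc_points N_def)
  finally show ?thesis .
qed

lemma sqrt_combination_ge:
  assumes l: "0 \<le> l" "l \<le> 1" and PQ: "0 \<le> P" "0 \<le> Q"
  shows "l * sqrt P + (1 - l) * sqrt Q \<le> sqrt (l * P + (1 - l) * Q)"
proof (rule real_le_rsqrt)
  define p q where "p = sqrt P" and "q = sqrt Q"
  have pp: "p^2 = P" "q^2 = Q" using PQ by (simp_all add: p_def q_def)
  have "0 \<le> l * (1 - l) * (p - q)^2" using l by simp
  hence "(l * p + (1 - l) * q)^2 \<le> l * p^2 + (1 - l) * q^2"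
    by (simp add: power2_eq_square algebra_simps)
  thus "(l * sqrt P + (1 - l) * sqrt Q)^2 \<le> l * P + (1 - l) * Q"
    using pp by (simp add: p_def q_def)
qed

lemma square_combination_le:
  fixes l a b :: real
  assumes l: "0 \<le> l" "l \<le> 1"
  shows "(l * a + (1 - l) * b)^2 \<le> l * a^2 + (1 - l) * b^2"
proof -
  have "0 \<le> l * (1 - l) * (a - b)^2" using l by simp
  thus ?thesis by (simp add: power2_eq_square algebra_simps)
qed

lemma circle_above_chord:
  fixes R a y :: real
  assumes a: "0 \<le> a" "a + 1 \<le> R" and y: "a \<le> y" "y \<le> a + 1"
  shows "sqrt (R^2 - a^2) + (sqrt (R^2 - (a+1)^2) - sqrt (R^2 - a^2)) * (y - a) \<le> sqrt (R^2 - y^2)"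
proof -
  define l where "l = a + 1 - y"
  have l: "0 \<le> l" "l \<le> 1" using y by (auto simp: l_def)
  have R0: "0 \<le> R" using a by simp
  have P: "0 \<le> R^2 - a^2" using a by (simp add: power_mono)
  have Q: "0 \<le> R^2 - (a+1)^2" using a by (simp add: power_mono)
  have yl: "y = l * a + (1 - l) * (a + 1)" by (simp add: l_def algebra_simps)
  have "sqrt (R^2 - a^2) + (sqrt (R^2 - (a+1)^2) - sqrt (R^2 - a^2)) * (y - a)
      = l * sqrt (R^2 - a^2) + (1 - l) * sqrt (R^2 - (a+1)^2)"
    by (simp add: l_def algebra_simps)
  also have "\<dots> \<le> sqrt (l * (R^2 - a^2) + (1 - l) * (R^2 - (a+1)^2))"
    by (rule sqrt_combination_ge[OF l P Q])
  also have "\<dots> \<le> sqrt (R^2 - y^2)"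
  proof -
    have "y^2 \<le> l * a^2 + (1 - l) * (a+1)^2" unfolding yl by (rule square_combination_le[OF l])
    hence "l * (R^2 - a^2) + (1 - l) * (R^2 - (a+1)^2) \<le> R^2 - y^2" by (simp add: algebra_simps)
    thus ?thesis by simp
  qed
  finally show ?thesis .
qed

definition circle_fun :: "real \<Rightarrow> real \<Rightarrow> real" where "circle_fun R y = sqrt (R^2 - y^2)"

lemma continuous_on_circle_fun: "continuous_on UNIV (circle_fun R)"
  unfolding circle_fun_def by (intro continuous_intros)

text \<open>The circle is concave, so each trapezoid lies below it.\<close>

lemma trapezoid_le_integral_circle_fun:
  assumes a: "0 \<le> a" "a + 1 \<le> R"
  shows "(circle_fun R a + circle_fun R (a + 1)) / 2 \<le> integral {a..a+1} (circle_fun R)"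
proof -
  define L where "L y = circle_fun R a + (circle_fun R (a+1) - circle_fun R a) * (y - a)" for y
  define fa fb where "fa = circle_fun R a" and "fb = circle_fun R (a + 1)"
  have h1: "((\<lambda>y. y) has_integral ((a+1)^2 - a^2)/2) {a..a+1}" by (rule ident_has_integral) simp
  have h2: "((\<lambda>y. (fb - fa) * y) has_integral (fb - fa) * (((a+1)^2 - a^2)/2)) {a..a+1}"
    by (rule has_integral_mult_right[OF h1])
  have h3: "((\<lambda>y. fa - (fb - fa) * a) has_integral (fa - (fb - fa) * a)) {a..a+1}"
    using has_integral_const_real[of "fa - (fb - fa) * a" a "a+1"] by simp
  have h4: "((\<lambda>y. (fa - (fb - fa) * a) + (fb - fa) * y) has_integral
      (fa - (fb - fa) * a) + (fb - fa) * (((a+1)^2 - a^2)/2)) {a..a+1}"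
    by (rule has_integral_add[OF h3 h2])
  have v: "(fa - (fb - fa) * a) + (fb - fa) * (((a+1)^2 - a^2)/2) = (fa + fb) / 2"
  proof -
    have e: "(a+1)^2 - a^2 = 2*a+1" by (simp add: power2_eq_square algebra_simps)
    show ?thesis unfolding e by (simp add: field_simps)
  qed
  have hL: "(L has_integral (circle_fun R a + circle_fun R (a + 1)) / 2) {a..a+1}"
  proof (rule has_integral_eq[rotated])
    show "((\<lambda>y. (fa - (fb - fa) * a) + (fb - fa) * y) has_integral (circle_fun R a + circle_fun R (a + 1)) / 2) {a..a+1}"
      using h4[unfolded v] by (simp only: fa_def fb_def)
    fix y show "(fa - (fb - fa) * a) + (fb - fa) * y = L y"
      by (simp add: L_def fa_def fb_def algebra_simps)
  qed
  have "integral {a..a+1} L \<le> integral {a..a+1} (circle_fun R)"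
  proof (rule integral_le)
    show "L integrable_on {a..a+1}" using hL by blast
    show "circle_fun R integrable_on {a..a+1}"
      by (rule integrable_continuous_interval) (rule continuous_on_subset[OF continuous_on_circle_fun], simp)
  next
    fix y assume "y \<in> {a..a+1}"
    thus "L y \<le> circle_fun R y" unfolding L_def circle_fun_def using circle_above_chord[OF a, of y] by simp
  qed
  thus ?thesis using hL by (simp add: integral_unique)
qed

lemma sum_circle_fun_le_integral:
  assumes k: "real k \<le> R"
  shows "(\<Sum>n\<in>{1..k}. circle_fun R (real n)) \<le> integral {0..real k} (circle_fun R) - (R - circle_fun R (real k)) / 2"
  using k
proof (induction k)
  case 0
  have "0 \<le> R" using 0 by simp
  thus ?case by (simp add: circle_fun_def)
next
  case (Suc k)
  have k: "real k \<le> R" using Suc.prems by simp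
  have tr: "(circle_fun R (real k) + circle_fun R (real k + 1)) / 2 \<le> integral {real k..real k + 1} (circle_fun R)"
    by (rule trapezoid_le_integral_circle_fun) (use Suc.prems in auto)
  have comb: "integral {0..real k} (circle_fun R) + integral {real k..real k + 1} (circle_fun R) = integral {0..real k + 1} (circle_fun R)"
    by (rule Henstock_Kurzweil_Integration.integral_combine)
      (auto intro: integrable_continuous_interval continuous_on_subset[OF continuous_on_circle_fun])
  have "(\<Sum>n\<in>{1..Suc k}. circle_fun R (real n)) = (\<Sum>n\<in>{1..k}. circle_fun R (real n)) + circle_fun R (real k + 1)"
    by (simp add: add.commute)
  also have "\<dots> \<le> integral {0..real k} (circle_fun R) - (R - circle_fun R (real k)) / 2 + circle_fun R (real k + 1)"
    using Suc.IH[OF k] by simp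
  also have "\<dots> \<le> integral {0..real k + 1} (circle_fun R) - (R - circle_fun R (real k + 1)) / 2"
    using tr comb by argo
  finally show ?case by (simp add: add.commute)
qed

lemma card_quarter_disc_points_le:
  assumes R: "1 \<le> R"
  shows "real (card (quarter_disc_points R)) \<le> pi / 4 * R^2 - R / 2 + sqrt (R^2 - (real (nat \<lfloor>R\<rfloor>))^2) / 2"
proof -
  define M where "M = nat \<lfloor>R\<rfloor>"
  have MR: "real M \<le> R" using R by (simp add: M_def)
  have "real (card (quarter_disc_points R)) = (\<Sum>n\<in>{1..M}. real (row_count R n))" using R by (simp add: card_quarter_disc_points M_def)
  also have "\<dots> \<le> (\<Sum>n\<in>{1..M}. circle_fun R (real n))"
  proof (rule sum_mono)
    fix n assume n: "n \<in> {1..M}"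
    have "real n \<le> R" using n MR by simp
    thus "real (row_count R n) \<le> circle_fun R (real n)" using row_count_bounds(1)[of R n] R by (simp add: circle_fun_def)
  qed
  also have "\<dots> \<le> integral {0..real M} (circle_fun R) - (R - circle_fun R (real M)) / 2" by (rule sum_circle_fun_le_integral[OF MR])
  also have "integral {0..real M} (circle_fun R) \<le> pi / 4 * R^2"
  proof -
    have "0 \<le> integral {real M..R} (circle_fun R)"
      by (rule integral_nonneg) (auto intro: integrable_continuous_interval
          continuous_on_subset[OF continuous_on_circle_fun] simp: circle_fun_def)
    hence "integral {0..real M} (circle_fun R) \<le> integral {0..real M} (circle_fun R) + integral {real M..R} (circle_fun R)"
      by simp
    also have "\<dots> = integral {0..R} (circle_fun R)"
      by (rule Henstock_Kurzweil_Integration.integral_combine) (use MR in \<open>auto intro: integrable_continuous_interval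
          continuous_on_subset[OF continuous_on_circle_fun]\<close>)
    also have "\<dots> = pi / 4 * R^2"
    proof -
      have "(circle_fun R has_integral pi / 4 * R^2) {0..R}" using has_integral_quarter_circle[of R] R unfolding circle_fun_def by simp
      thus ?thesis by (rule integral_unique)
    qed
    finally show ?thesis .
  qed
  finally have "real (card (quarter_disc_points R)) \<le> pi / 4 * R^2 - (R - circle_fun R (real M)) / 2"
    by simp
  then show ?thesis unfolding circle_fun_def M_def by argo
qed

section \<open>Numerical estimates\<close>

lemma arcsin_ge_self: assumes "0 \<le> x" "x \<le> 1" shows "x \<le> arcsin x"
proof -
  have "0 \<le> arcsin x" using assms by (simp add: arcsin_nonneg)
  hence "sin (arcsin x) \<le> arcsin x" by (rule sin_x_le_x)
  thus ?thesis using assms by simp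
qed

lemma arcsin_inverse_le:
  assumes t: "1 < t"
  shows "arcsin (1 / t) \<le> 1 / sqrt (t^2 - 1)"
proof -
  have x: "-1 < 1/t" "1/t < 1" using t by (auto simp: field_simps)
  have q: "sqrt (1 - (1/t)^2) = sqrt (t^2 - 1) / t"
  proof -
    have "1 - (1/t)^2 = (t^2 - 1) / t^2" using t by (simp add: field_simps)
    thus ?thesis using t by (simp add: real_sqrt_divide)
  qed
  have st: "0 < sqrt (t^2 - 1)" using t by (simp add: power_strict_mono abs_if)
  have "arcsin (1/t) = arctan ((1/t) / sqrt (1 - (1/t)^2))" by (rule arcsin_arctan[OF x])
  also have "(1/t) / sqrt (1 - (1/t)^2) = 1 / sqrt (t^2 - 1)" unfolding q using t st by (simp add: field_simps)
  also have "arctan (1 / sqrt (t^2 - 1)) \<le> 1 / sqrt (t^2 - 1)" by (rule arctan_le_self) (use st in simp)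
  finally show ?thesis .
qed

lemma pi_sqrt2_bounds: "(444286/100000) \<le> pi * sqrt 2" "(314159/100000) \<le> pi" "(141421/100000) \<le> sqrt 2" "sqrt 2 \<le> (141422/100000)"
proof -
  show p: "(314159/100000) \<le> pi" using pi_approx(1) by simp
  show s: "(141421/100000) \<le> sqrt 2" by (rule real_le_rsqrt) (simp add: power2_eq_square)
  show "sqrt 2 \<le> (141422/100000)" by (rule real_le_lsqrt) (simp_all add: power2_eq_square)
  have "(314159/100000) * (141421/100000) \<le> pi * sqrt 2" by (rule mult_mono[OF p s]) auto
  thus "(444286/100000) \<le> pi * sqrt 2" by simp
qed

lemma circle_arcsin_bound:
  assumes t: "3 \<le> t"
  shows "t^2 * arcsin (1 / t) + sqrt (t^2 - 1) \<le> 2 * t + 1 / 20"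
proof -
  define \<sigma> where "\<sigma> = sqrt (t^2 - 1)"
  have t0: "0 < t" using t by simp
  have tt: "9 \<le> t^2" using power_mono[OF t, of 2] by simp
  have ss: "\<sigma>^2 = t^2 - 1" using tt by (simp add: \<sigma>_def)
  have upper: "\<sigma> \<le> t - 1 / (2 * t)" unfolding \<sigma>_def
  proof (rule real_le_lsqrt)
    have "1 / (2 * t) \<le> 1" using t by (simp add: field_simps)
    then show "0 \<le> t - 1 / (2 * t)" using t by linarith
    have "(t - 1 / (2 * t))^2 = t^2 - 1 + 1 / (4 * t^2)" using t0 by (simp add: power2_eq_square field_simps)
    then show "t^2 - 1 \<le> (t - 1 / (2 * t))^2" by simp
  qed
  have lower: "t - 1 / t \<le> \<sigma>" unfolding \<sigma>_def
  proof (rule real_le_rsqrt)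
    have "(t - 1 / t)^2 = t^2 - 2 + 1 / t^2" using t0 by (simp add: power2_eq_square field_simps)
    moreover have "1 / t^2 \<le> 1" using tt by (simp add: divide_le_eq)
    ultimately show "(t - 1 / t)^2 \<le> t^2 - 1" by linarith
  qed
  have "1 / t \<le> 1 / 3" using t by (simp add: field_simps)
  then have \<sigma>: "8 / 3 \<le> \<sigma>" using lower t by linarith
  have "1 / \<sigma> - 1 / t = (t - \<sigma>) / (\<sigma> * t)" using \<sigma> t0 by (simp add: field_simps)
  also have "\<dots> \<le> (1 / t) / (\<sigma> * t)" using lower \<sigma> t0 by (intro divide_right_mono) auto
  also have "\<dots> = 1 / (\<sigma> * t^2)" by (simp add: power2_eq_square field_simps)
  also have "\<dots> \<le> 1 / (8 / 3 * 9)"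
    using \<sigma> tt by (intro divide_left_mono mult_mono) (auto intro!: mult_pos_pos)
  finally have inv: "1 / \<sigma> \<le> 1 / t + 1 / 20" by simp
  have "arcsin (1 / t) \<le> 1 / \<sigma>" unfolding \<sigma>_def by (rule arcsin_inverse_le) (use t in simp)
  then have "t^2 * arcsin (1 / t) \<le> t^2 * (1 / \<sigma>)" by (rule mult_left_mono) simp
  also have "t^2 * (1 / \<sigma>) = \<sigma> + 1 / \<sigma>" using \<sigma> ss by (simp add: field_simps power2_eq_square)
  moreover have "2 * \<sigma> \<le> 2 * t - 1 / t" using upper t0 by (simp add: field_simps)
  ultimately show ?thesis using inv unfolding \<sigma>_def[symmetric] by linarith
qed

lemma R_plus_sqrt2_ge_3: "2 < R \<Longrightarrow> 3 \<le> R + sqrt 2"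
  using pi_sqrt2_bounds(3) by simp

lemma arcsin_inverse_mult_ge:
  assumes "1 \<le> \<rho>" "\<rho> \<le> t"
  shows "2 * a * t - (a^2 + 1) * \<rho> \<le> arcsin (1 / \<rho>) * (t^2 - \<rho>^2)"
proof -
  have "(2 * a * t - (a^2 + 1) * \<rho>) * \<rho> \<le> t^2 - \<rho>^2"
    using zero_le_power2[of "t - a * \<rho>"] by (simp add: power2_eq_square algebra_simps)
  then have "2 * a * t - (a^2 + 1) * \<rho> \<le> (1 / \<rho>) * (t^2 - \<rho>^2)"
    using assms(1) by (simp add: le_divide_eq)
  also have "\<dots> \<le> arcsin (1 / \<rho>) * (t^2 - \<rho>^2)"
    using assms by (intro mult_right_mono arcsin_ge_self power_mono) auto
  finally show ?thesis .
qed

lemma area_bound_I2: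
  assumes R: "2 < R" and t: "R + sqrt 2 \<le> t"
  shows "(pi / 4 - arcsin (1 / (R + sqrt 2))) * (t^2 - (R + sqrt 2)^2)
    \<le> quarter_disc_count_lower t - pi / 4 * R^2"
proof -
  have t3: "3 \<le> t" using R_plus_sqrt2_ge_3[OF R] t by linarith
  note circle = circle_arcsin_bound[OF t3]
  have "2 * t - 2 * (R + sqrt 2) \<le> arcsin (1 / (R + sqrt 2)) * (t^2 - (R + sqrt 2)^2)"
    using arcsin_inverse_mult_ge[of "R + sqrt 2" t 1] R_plus_sqrt2_ge_3[OF R] t by simp
  moreover have "(444286/100000) * R \<le> pi * sqrt 2 * R"
    using pi_sqrt2_bounds(1) R by (intro mult_right_mono) auto
  ultimately have main: "2 * t - 19 / 20
      \<le> pi * sqrt 2 * R / 2 + pi / 2 + arcsin (1 / (R + sqrt 2)) * (t^2 - (R + sqrt 2)^2)"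
    using pi_sqrt2_bounds(2,4) R by argo
  have expand: "(pi / 4 - arcsin (1 / (R + sqrt 2))) * (t^2 - (R + sqrt 2)^2)
      = pi / 4 * t^2 - pi / 4 * R^2 - (pi * sqrt 2 * R) / 2 - pi / 2
        - arcsin (1 / (R + sqrt 2)) * (t^2 - (R + sqrt 2)^2)"
    by (simp add: power2_eq_square algebra_simps)
  show ?thesis unfolding expand quarter_disc_count_lower_def using main circle by argo
qed

lemma sqrt_2R_minus_1_le:
  assumes R: "2 \<le> R"
  shows "sqrt (2 * R - 1) \<le> (119286/100000) * R - 55470/100000"
proof (rule real_le_lsqrt)
  show "0 \<le> (119286/100000) * R - 55470/100000" using R by simp
  define d where "d = R - 2"
  have d: "0 \<le> d" using R by (simp add: d_def)
  have Rd: "R = d + 2" by (simp add: d_def)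
  have "((119286/100000) * R - 55470/100000)^2 - (2 * R - 1)
      = (119286/100000)^2 * d^2 + ((4 * (119286/100000)^2 - 2 * (119286/100000) * (55470/100000) - 2) * d
        + (4 * (119286/100000)^2 - 4 * (119286/100000) * (55470/100000) + (55470/100000)^2 - 3))"
    unfolding Rd by (simp add: power2_eq_square algebra_simps)
  also have "\<dots> \<ge> 0" using d by (intro add_nonneg_nonneg mult_nonneg_nonneg) (simp_all add: power2_eq_square)
  finally show "2 * R - 1 \<le> ((119286/100000) * R - 55470/100000)^2" by simp
qed

lemma floor_gap_bound:
  assumes R: "1 \<le> R"
  shows "- sqrt (2 * R - 1) \<le> R - real (nat \<lfloor>R\<rfloor>) - sqrt (R^2 - (real (nat \<lfloor>R\<rfloor>))^2)"
proof -
  define M where "M = real (nat \<lfloor>R\<rfloor>)"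
  have M: "M = real_of_int \<lfloor>R\<rfloor>" using R by (simp add: M_def)
  have p0: "0 \<le> R - M" "R - M < 1" unfolding M by linarith+
  have M0: "0 \<le> M" by (simp add: M_def)
  have "R^2 - M^2 = (R - M) * (2 * R - (R - M))" by (simp add: power2_eq_square algebra_simps)
  also have "\<dots> \<le> 2 * R - 1"
  proof -
    have "0 \<le> (1 - (R - M)) * (2 * R - 1 - (R - M))" using p0 R by (intro mult_nonneg_nonneg) auto
    thus ?thesis by (simp add: algebra_simps)
  qed
  finally have "sqrt (R^2 - M^2) \<le> sqrt (2 * R - 1)" by simp
  thus ?thesis using p0 unfolding M_def[symmetric] by linarith
qed

lemma area_bound_I1:
  assumes R: "2 < R" and t: "R + sqrt 2 \<le> t"
  shows "(pi / 2 - arcsin (1 / (R + sqrt 2))) * (t^2 - (R + sqrt 2)^2)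
    \<le> 2 * (quarter_disc_count_lower t - (pi / 4 * R^2 - R / 2 + sqrt (R^2 - (real (nat \<lfloor>R\<rfloor>))^2) / 2))
       + (t - 1 - real (nat \<lfloor>R\<rfloor>))"
proof -
  have t3: "3 \<le> t" using R_plus_sqrt2_ge_3[OF R] t by linarith
  note circle = circle_arcsin_bound[OF t3]
  have "3 * t - 13 / 4 * (R + sqrt 2) \<le> arcsin (1 / (R + sqrt 2)) * (t^2 - (R + sqrt 2)^2)"
    using arcsin_inverse_mult_ge[of "R + sqrt 2" t "3/2"] R_plus_sqrt2_ge_3[OF R] t
    by (simp add: power_divide)
  moreover have "(444286/100000) * R \<le> pi * sqrt 2 * R"
    using pi_sqrt2_bounds(1) R by (intro mult_right_mono) auto
  moreover have "- sqrt (2 * R - 1) \<le> R - real (nat \<lfloor>R\<rfloor>) - sqrt (R^2 - (real (nat \<lfloor>R\<rfloor>))^2)"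
    using R by (intro floor_gap_bound) auto
  moreover have "sqrt (2 * R - 1) \<le> (119286/100000) * R - 55470/100000"
    using R by (intro sqrt_2R_minus_1_le) auto
  ultimately have main: "4 * t + 1 / 10 \<le> pi * sqrt 2 * R + pi + arcsin (1 / (R + sqrt 2)) * (t^2 - (R + sqrt 2)^2)
      + 1 + t + (R - real (nat \<lfloor>R\<rfloor>) - sqrt (R^2 - (real (nat \<lfloor>R\<rfloor>))^2))"
    using pi_sqrt2_bounds(2,4) R by argo
  have expand: "(pi / 2 - arcsin (1 / (R + sqrt 2))) * (t^2 - (R + sqrt 2)^2)
      = 2 * (pi / 4 * t^2) - 2 * (pi / 4 * R^2) - pi * sqrt 2 * R - pi
        - arcsin (1 / (R + sqrt 2)) * (t^2 - (R + sqrt 2)^2)"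
    by (simp add: power2_eq_square algebra_simps)
  show ?thesis unfolding expand quarter_disc_count_lower_def using main circle by argo
qed

section \<open>Abel summation\<close>

lemma has_integral_powr_derivative:
  fixes s a b :: real
  assumes s: "0 < s" and ab: "0 < a" "a \<le> b"
  shows "((\<lambda>t. 2 * s * t powr (-2 * s - 1)) has_integral (a powr (-2 * s) - b powr (-2 * s))) {a..b}"
proof -
  define F where "F t = - (t powr (-2 * s))" for t
  have "((\<lambda>t. 2 * s * t powr (-2 * s - 1)) has_integral (F b - F a)) {a..b}"
  proof (rule fundamental_theorem_of_calculus[of a b F])
    show "a \<le> b" by (rule ab(2))
    fix x assume x: "x \<in> {a..b}"
    hence x0: "0 < x" using ab by auto
    have "(F has_real_derivative - ((-2 * s) * x powr (-2 * s - 1))) (at x)"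
      unfolding F_def using DERIV_minus[OF has_real_derivative_powr[OF x0, of "-2 * s"]] by simp
    hence "(F has_real_derivative 2 * s * x powr (-2 * s - 1)) (at x within {a..b})"
      by (simp add: has_field_derivative_at_within)
    thus "(F has_vector_derivative 2 * s * x powr (-2 * s - 1)) (at x within {a..b})"
      by (simp add: has_real_derivative_iff_has_vector_derivative)
  qed
  thus ?thesis by (simp add: F_def)
qed

definition abel_primitive :: "real \<Rightarrow> real \<Rightarrow> real \<Rightarrow> real \<Rightarrow> real" where
  "abel_primitive A s rho t = A * s * t powr (2 - 2 * s) / (2 - 2 * s) + A / 2 * rho^2 * t powr (-2 * s)"

lemma has_integral_abel_weight:
  assumes s: "1 < s" and ab: "0 < a" "a \<le> b"
  shows "((\<lambda>t. 2 * s * t powr (-2 * s - 1) * (A / 2 * (t^2 - rho^2))) has_integral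
      (abel_primitive A s rho b - abel_primitive A s rho a)) {a..b}"
proof (rule fundamental_theorem_of_calculus[OF ab(2)])
  fix x assume x: "x \<in> {a..b}"
  hence x0: "0 < x" using ab by auto
  have "2 - 2 * s < 0" using s by simp
  hence s2: "2 - 2 * s \<noteq> 0" by simp
  have d1: "((\<lambda>t. t powr (2 - 2 * s)) has_real_derivative (2 - 2 * s) * x powr (1 - 2 * s)) (at x)"
    using has_real_derivative_powr[OF x0, of "2 - 2 * s"] by (simp add: algebra_simps)
  have d2: "((\<lambda>t. t powr (-2 * s)) has_real_derivative (-2 * s) * x powr (-2 * s - 1)) (at x)"
    using has_real_derivative_powr[OF x0, of "-2 * s"] by simp
  have d: "(abel_primitive A s rho has_real_derivative
      A * s * ((2 - 2 * s) * x powr (1 - 2 * s)) / (2 - 2 * s) + A / 2 * rho^2 * ((-2 * s) * x powr (-2 * s - 1))) (at x)"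
    unfolding abel_primitive_def by (intro DERIV_add DERIV_cdivide DERIV_cmult d1 d2)
  have pw: "x powr (-2 * s - 1) * x^2 = x powr (1 - 2 * s)"
  proof -
    have "x powr (-2 * s - 1) * x^2 = x powr (-2 * s - 1) * x powr 2" using x0 by (simp add: powr_realpow)
    also have "\<dots> = x powr (1 - 2 * s)" by (simp add: powr_add[symmetric])
    finally show ?thesis .
  qed
  have "A * s * ((2 - 2 * s) * x powr (1 - 2 * s)) / (2 - 2 * s) + A / 2 * rho^2 * ((-2 * s) * x powr (-2 * s - 1))
      = 2 * s * x powr (-2 * s - 1) * (A / 2 * (x^2 - rho^2))"
    unfolding pw[symmetric] using s2 by (simp add: field_simps)
  with d have "(abel_primitive A s rho has_real_derivative 2 * s * x powr (-2 * s - 1) * (A / 2 * (x^2 - rho^2))) (at x)"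
    by simp
  thus "(abel_primitive A s rho has_vector_derivative 2 * s * x powr (-2 * s - 1) * (A / 2 * (x^2 - rho^2))) (at x within {a..b})"
    by (simp add: has_real_derivative_iff_has_vector_derivative[symmetric] has_field_derivative_at_within)
qed

lemma abel_primitive_tendsto_0:
  assumes s: "1 < s"
  shows "((\<lambda>T. abel_primitive A s rho T) \<longlongrightarrow> 0) at_top"
proof -
  have l1: "((\<lambda>T. T powr (2 - 2 * s)) \<longlongrightarrow> 0) at_top"
    by (rule tendsto_neg_powr) (use s in \<open>auto intro: filterlim_ident\<close>)
  have l2: "((\<lambda>T. T powr (-2 * s)) \<longlongrightarrow> 0) at_top"
    by (rule tendsto_neg_powr) (use s in \<open>auto intro: filterlim_ident\<close>)
  have "((\<lambda>T. A * s * T powr (2 - 2 * s) / (2 - 2 * s) + A / 2 * rho^2 * T powr (-2 * s)) \<longlongrightarrow>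
      A * s * 0 / (2 - 2 * s) + A / 2 * rho^2 * 0) at_top"
  proof -
    have "2 - 2 * s < 0" using s by simp
    hence s2: "2 - 2 * s \<noteq> 0" by simp
    show ?thesis by (intro tendsto_intros l1 l2) (use s2 in auto)
  qed
  thus ?thesis unfolding abel_primitive_def by simp
qed

lemma abel_primitive_at_rho:
  assumes s: "1 < s" and r: "0 < rho"
  shows "- abel_primitive A s rho rho = A * (1 / (2 * s - 2)) * (1 / rho) powr (2 * s - 2)"
proof -
  have a: "rho^2 * rho powr (-2 * s) = rho powr (2 - 2 * s)"
  proof -
    have "rho^2 * rho powr (-2 * s) = rho powr 2 * rho powr (-2 * s)" using r by (simp add: powr_realpow)
    also have "\<dots> = rho powr (2 - 2 * s)" by (simp add: powr_add[symmetric])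
    finally show ?thesis .
  qed
  have b: "(1 / rho) powr (2 * s - 2) = rho powr (2 - 2 * s)"
    using r by (simp add: powr_divide powr_minus_divide[symmetric])
  have s2: "2 * s - 2 \<noteq> 0" "2 - 2 * s \<noteq> 0" "s \<noteq> 1" using s by auto
  have h: "abel_primitive A s rho rho = A * s * rho powr (2 - 2 * s) / (2 - 2 * s) + A / 2 * rho powr (2 - 2 * s)"
    unfolding abel_primitive_def a[symmetric] by (simp add: mult.assoc)
  have "2 - 2 * s = - (2 * s - 2)" by simp
  then show ?thesis unfolding h b using s2 by (simp add: field_simps)
qed

lemma abel_primitive_diff_le_infsum:
  fixes J :: "'a :: real_normed_vector set"
  assumes s: "1 < s" and rho: "0 < rho" and T: "rho \<le> T"
    and summ: "(\<lambda>b. 1 / norm b powr (2 * s)) summable_on J"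
    and pos: "\<And>b. b \<in> J \<Longrightarrow> 0 < norm b"
    and fin: "finite {b\<in>J. norm b \<le> T}"
    and cnt: "\<And>t. rho \<le> t \<Longrightarrow> A / 2 * (t^2 - rho^2) \<le> real (card {b\<in>J. norm b \<le> t})"
  shows "abel_primitive A s rho T - abel_primitive A s rho rho \<le> (\<Sum>\<^sub>\<infinity>b\<in>J. 1 / norm b powr (2 * s))"
proof -
  define w where "w t = 2 * s * t powr (-2 * s - 1)" for t
  define F where "F = {b\<in>J. norm b \<le> T}"
  define rb where "rb b = max (norm b) rho" for b :: 'a
  have w_integral: "((\<lambda>t. if rb b \<le> t then w t else 0) has_integral (rb b powr (-2 * s) - T powr (-2 * s))) {rho..T}"
    if b: "b \<in> F" for b
  proof -
    have rbT: "rho \<le> rb b" "rb b \<le> T" using b T by (auto simp: rb_def F_def)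
    have "(w has_integral (rb b powr (-2 * s) - T powr (-2 * s))) {rb b..T}"
      unfolding w_def by (rule has_integral_powr_derivative) (use s rho rbT in auto)
    then have "((\<lambda>x. if x \<in> cbox (rb b) T then w x else 0) has_integral (rb b powr (-2 * s) - T powr (-2 * s)))
        (cbox rho T)"
      by (intro has_integral_restrict_closed_subinterval) (use rbT in auto)
    then have "((\<lambda>x. if x \<in> cbox (rb b) T then w x else 0) has_integral (rb b powr (-2 * s) - T powr (-2 * s)))
        {rho..T}" by simp
    then show ?thesis by (rule has_integral_eq[rotated]) auto
  qed
  have "abel_primitive A s rho T - abel_primitive A s rho rho \<le> (\<Sum>b\<in>F. (rb b powr (-2 * s) - T powr (-2 * s)))"
  proof (rule has_integral_le)
    show "((\<lambda>t. w t * (A / 2 * (t^2 - rho^2))) has_integral (abel_primitive A s rho T - abel_primitive A s rho rho)) {rho..T}"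
      using has_integral_abel_weight[OF s rho T, of A rho] by (simp add: w_def)
    show "((\<lambda>t. \<Sum>b\<in>F. (if rb b \<le> t then w t else 0)) has_integral
        (\<Sum>b\<in>F. (rb b powr (-2 * s) - T powr (-2 * s)))) {rho..T}"
      using fin w_integral by (intro has_integral_sum) (auto simp: F_def)
    fix t assume t: "t \<in> {rho..T}"
    have "(\<Sum>b\<in>F. (if rb b \<le> t then w t else 0)) = (\<Sum>b\<in>{b\<in>F. rb b \<le> t}. w t)"
      using fin by (intro sum.inter_filter[symmetric]) (simp add: F_def)
    also have "\<dots> = w t * real (card {b\<in>F. rb b \<le> t})" by simp
    also have "{b\<in>F. rb b \<le> t} = {b\<in>J. norm b \<le> t}" using t by (auto simp: F_def rb_def)
    finally have sum_eq: "(\<Sum>b\<in>F. (if rb b \<le> t then w t else 0)) = w t * real (card {b\<in>J. norm b \<le> t})" .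
    have "0 \<le> w t" using s by (simp add: w_def)
    then show "w t * (A / 2 * (t^2 - rho^2)) \<le> (\<Sum>b\<in>F. (if rb b \<le> t then w t else 0))"
      unfolding sum_eq using cnt[of t] t by (intro mult_left_mono) auto
  qed
  also have "\<dots> \<le> (\<Sum>b\<in>F. 1 / norm b powr (2 * s))"
  proof (rule sum_mono)
    fix b assume b: "b \<in> F"
    have "rb b powr (-2 * s) \<le> norm b powr (-2 * s)"
      using b pos s by (intro powr_mono2') (auto simp: rb_def F_def)
    moreover have "1 / norm b powr (2 * s) = norm b powr (-2 * s)"
      using powr_minus_divide[of "norm b" "2 * s"] by simp
    ultimately show "rb b powr (-2 * s) - T powr (-2 * s) \<le> 1 / norm b powr (2 * s)"
      using powr_ge_zero[of T "-2 * s"] by linarith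
  qed
  also have "\<dots> \<le> (\<Sum>\<^sub>\<infinity>b\<in>J. 1 / norm b powr (2 * s))"
    using fin by (intro finite_sum_le_infsum[OF summ]) (auto simp: F_def)
  finally show ?thesis .
qed

text \<open>The sum of \<open>|b|^(-2s)\<close> is the integral of \<open>2s t^(-2s-1)\<close> against the
  counting function of the \<open>b\<close> with \<open>|b| \<le> t\<close>, which is bounded below by \<open>A/2 (t^2 - rho^2)\<close>.\<close>

lemma infsum_powr_ge_of_count_ge:
  fixes J :: "'a :: real_normed_vector set"
  assumes s: "1 < s" and rho: "0 < rho"
    and summ: "(\<lambda>b. 1 / norm b powr (2 * s)) summable_on J"
    and pos: "\<And>b. b \<in> J \<Longrightarrow> 0 < norm b"
    and fin: "\<And>t. finite {b\<in>J. norm b \<le> t}"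
    and cnt: "\<And>t. rho \<le> t \<Longrightarrow> A / 2 * (t^2 - rho^2) \<le> real (card {b\<in>J. norm b \<le> t})"
  shows "A * (1 / (2 * s - 2)) * (1 / rho) powr (2 * s - 2) \<le> (\<Sum>\<^sub>\<infinity>b\<in>J. 1 / norm b powr (2 * s))"
proof -
  have "((\<lambda>T. abel_primitive A s rho T - abel_primitive A s rho rho) \<longlongrightarrow> 0 - abel_primitive A s rho rho) at_top"
    by (intro tendsto_diff abel_primitive_tendsto_0[OF s] tendsto_const)
  then have "0 - abel_primitive A s rho rho \<le> (\<Sum>\<^sub>\<infinity>b\<in>J. 1 / norm b powr (2 * s))"
    using abel_primitive_diff_le_infsum[OF s rho _ summ pos fin cnt]
    by (intro tendsto_le[OF trivial_limit_at_top_linorder tendsto_const])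
      (auto simp: eventually_at_top_linorder)
  then show ?thesis using abel_primitive_at_rho[OF s rho, of A] by simp
qed

section \<open>Gaussian integers in annuli\<close>

definition I2_point :: "nat \<times> nat \<Rightarrow> complex" where
  "I2_point p = Complex (real (fst p)) (- real (snd p))"

lemma norm_I2_point: "cmod (I2_point (m, n)) = sqrt (real m ^ 2 + real n ^ 2)"
  by (simp add: I2_point_def cmod_def)

lemma inj_I2_point: "inj I2_point"
  by (auto simp: inj_def I2_point_def complex_eq_iff)

lemma I2_eq_image: "I2 = I2_point ` {p. 1 \<le> fst p \<and> 1 \<le> snd p}"
proof (intro set_eqI iffI)
  fix b assume "b \<in> I2"
  then obtain m :: nat and n :: int where mn: "b = Complex (real m) (real_of_int n)" "1 \<le> m" "n < 0"
    unfolding I2_def by blast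
  then have "b = I2_point (m, nat (-n))" "1 \<le> nat (-n)" by (simp_all add: I2_point_def)
  then show "b \<in> I2_point ` {p. 1 \<le> fst p \<and> 1 \<le> snd p}"
    using mn by (intro rev_image_eqI[of "(m, nat (-n))"]) auto
next
  fix b assume "b \<in> I2_point ` {p. 1 \<le> fst p \<and> 1 \<le> snd p}"
  then obtain m n :: nat where mn: "b = I2_point (m, n)" "1 \<le> m" "1 \<le> n" by auto
  then have "b = Complex (real m) (real_of_int (- int n))" "- int n < 0" by (simp_all add: I2_point_def)
  then show "b \<in> I2" unfolding I2_def using mn by blast
qed

lemma I2_annulus_eq:
  assumes R: "0 \<le> R" and t: "R \<le> t"
  shows "{b \<in> {b\<in>I2. R < cmod b}. cmod b \<le> t} = I2_point ` (quarter_disc_points t - quarter_disc_points R)"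
proof -
  have "R < sqrt x \<longleftrightarrow> R^2 < x" "sqrt x \<le> t \<longleftrightarrow> x \<le> t^2" for x
    using real_sqrt_less_iff[of "R^2" x] real_sqrt_le_iff[of x "t^2"] R t by simp_all
  then have "R < cmod (I2_point (m, n)) \<and> cmod (I2_point (m, n)) \<le> t \<longleftrightarrow>
      \<not> (real m ^ 2 + real n ^ 2 \<le> R^2) \<and> real m ^ 2 + real n ^ 2 \<le> t^2" for m n
    unfolding norm_I2_point by auto
  then show ?thesis unfolding I2_eq_image quarter_disc_points_def by (auto simp: image_iff)
qed

lemma card_quarter_disc_points_diff:
  assumes "0 \<le> R" "R \<le> t"
  shows "real (card (quarter_disc_points t - quarter_disc_points R)) = real (card (quarter_disc_points t)) - real (card (quarter_disc_points R))"
proof -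
  have sub: "quarter_disc_points R \<subseteq> quarter_disc_points t" by (rule quarter_disc_points_mono) (use assms in auto)
  have f: "finite (quarter_disc_points R)" "finite (quarter_disc_points t)" using finite_quarter_disc_points assms by auto
  have "card (quarter_disc_points t - quarter_disc_points R)
      = card (quarter_disc_points t) - card (quarter_disc_points R)"
    by (rule card_Diff_subset[OF f(1) sub])
  moreover have "card (quarter_disc_points R) \<le> card (quarter_disc_points t)" by (rule card_mono[OF f(2) sub])
  ultimately show ?thesis by simp
qed


lemma I2_annulus_card:
  assumes "0 \<le> R" "R \<le> t"
  shows "finite {b \<in> {b\<in>I2. R < cmod b}. cmod b \<le> t}"
    "real (card {b \<in> {b\<in>I2. R < cmod b}. cmod b \<le> t})
      = real (card (quarter_disc_points t)) - real (card (quarter_disc_points R))"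
  unfolding I2_annulus_eq[OF assms]
  using assms finite_quarter_disc_points[of t] card_quarter_disc_points_diff[OF assms]
    card_image[OF inj_on_subset[OF inj_I2_point]]
  by simp_all

lemma finite_I2_annulus:
  assumes "0 \<le> R" shows "finite {b \<in> {b\<in>I2. R < cmod b}. cmod b \<le> t}"
proof (cases "R \<le> t")
  case True
  then show ?thesis using I2_annulus_card(1) assms by blast
next
  case False
  then have "{b \<in> {b\<in>I2. R < cmod b}. cmod b \<le> t} = {}" by auto
  then show ?thesis by (simp only: finite.emptyI)
qed

lemma card_quarter_disc_points_R_le:
  assumes R: "2 < R"
  shows "real (card (quarter_disc_points R)) \<le> pi / 4 * R^2 - R / 2 + sqrt (R^2 - (real (nat \<lfloor>R\<rfloor>))^2) / 2"
    "real (card (quarter_disc_points R)) \<le> pi / 4 * R^2"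
proof -
  show a: "real (card (quarter_disc_points R)) \<le> pi / 4 * R^2 - R / 2 + sqrt (R^2 - (real (nat \<lfloor>R\<rfloor>))^2) / 2"
    by (rule card_quarter_disc_points_le) (use R in simp)
  have "sqrt (R^2 - (real (nat \<lfloor>R\<rfloor>))^2) \<le> sqrt (R^2)" by (rule real_sqrt_le_mono) simp
  also have "\<dots> = R" using R by simp
  finally show "real (card (quarter_disc_points R)) \<le> pi / 4 * R^2" using a by linarith
qed


lemma card_I2_annulus_ge:
  assumes R: "2 < R" and t: "R + sqrt 2 \<le> t"
  shows "(pi / 2 - 2 * thetaR R) / 2 * (t^2 - (R + sqrt 2)^2) \<le> real (card {b \<in> {b\<in>I2. R < cmod b}. cmod b \<le> t})"
proof -
  have t3: "3 \<le> t" using R_plus_sqrt2_ge_3[OF R] t by linarith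
  have Rt: "R \<le> t" using t real_sqrt_ge_zero[of 2] by linarith
  have "(pi / 2 - 2 * thetaR R) / 2 * (t^2 - (R + sqrt 2)^2) = (pi / 4 - arcsin (1 / (R + sqrt 2))) * (t^2 - (R + sqrt 2)^2)"
    by (simp add: thetaR_def field_simps)
  also have "\<dots> \<le> quarter_disc_count_lower t - pi / 4 * R^2" by (rule area_bound_I2[OF R t])
  also have "\<dots> \<le> real (card {b \<in> {b\<in>I2. R < cmod b}. cmod b \<le> t})"
    using quarter_disc_count_lower_le_card[of t] card_quarter_disc_points_R_le(2)[OF R]
      I2_annulus_card(2)[of R t] power_mono[OF t3, of 2] R Rt t3
    by simp
  finally show ?thesis .
qed

lemma I1_eq: "I1 = I2 \<union> cnj ` I2 \<union> of_nat ` {1..}"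
proof (intro set_eqI iffI)
  fix b assume "b \<in> I1"
  then obtain m :: nat and n :: int where b: "b = Complex (real m) (real_of_int n)" "1 \<le> m"
    unfolding I1_def by blast
  consider "n < 0" | "n = 0" | "0 < n" by linarith
  then show "b \<in> I2 \<union> cnj ` I2 \<union> of_nat ` {1..}"
  proof cases
    case 1
    then show ?thesis using b unfolding I2_def by blast
  next
    case 2
    then have "b = of_nat m" using b by (simp add: complex_eq_iff)
    then show ?thesis using b by auto
  next
    case 3
    then have "cnj b = Complex (real m) (real_of_int (- n))" "- n < 0" using b by (simp_all add: complex_eq_iff)
    then have "cnj b \<in> I2" using b unfolding I2_def by blast
    then show ?thesis by (simp add: in_image_cnj_iff)
  qed
next
  fix b assume "b \<in> I2 \<union> cnj ` I2 \<union> of_nat ` {1..}"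
  then consider "b \<in> I2" | "cnj b \<in> I2" | m :: nat where "1 \<le> m" "b = of_nat m"
    by (auto simp: in_image_cnj_iff)
  then show "b \<in> I1"
  proof cases
    case 1
    then show ?thesis unfolding I1_def I2_def by blast
  next
    case 2
    then obtain m :: nat and n :: int where "cnj b = Complex (real m) (real_of_int n)" "1 \<le> m"
      unfolding I2_def by blast
    then have "b = Complex (real m) (real_of_int (- n))" "1 \<le> m" by (simp_all add: complex_eq_iff)
    then show ?thesis unfolding I1_def by blast
  next
    case 3
    then have "b = Complex (real m) (real_of_int 0)" by (simp add: complex_eq_iff)
    then show ?thesis unfolding I1_def using 3 by blast
  qed
qed

lemma axis_annulus:
  assumes R: "0 \<le> R" and t: "R \<le> t"
  shows "t - 1 - real (nat \<lfloor>R\<rfloor>) \<le> real (card {m::nat. R < real m \<and> real m \<le> t})"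
    "finite {m::nat. R < real m \<and> real m \<le> t}"
proof -
  have fin: "finite {m::nat. R < real m \<and> real m \<le> t}"
  proof (rule finite_subset[of _ "{..nat \<lfloor>t\<rfloor>}"])
    show "{m::nat. R < real m \<and> real m \<le> t} \<subseteq> {..nat \<lfloor>t\<rfloor>}"
      by (auto simp: le_nat_iff le_floor_iff)
  qed simp
  thus "finite {m::nat. R < real m \<and> real m \<le> t}" .
  have sub: "{nat \<lfloor>R\<rfloor> + 1..nat \<lfloor>t\<rfloor>} \<subseteq> {m::nat. R < real m \<and> real m \<le> t}"
  proof
    fix m assume m: "m \<in> {nat \<lfloor>R\<rfloor> + 1..nat \<lfloor>t\<rfloor>}"
    have "R < real_of_int \<lfloor>R\<rfloor> + 1" by linarith
    moreover have "real_of_int \<lfloor>R\<rfloor> + 1 \<le> real m"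
    proof -
      have "Suc (nat \<lfloor>R\<rfloor>) \<le> m" using m by simp
      hence "real (Suc (nat \<lfloor>R\<rfloor>)) \<le> real m" by (simp only: of_nat_le_iff)
      moreover have "real (nat \<lfloor>R\<rfloor>) = real_of_int \<lfloor>R\<rfloor>" using R by simp
      ultimately show ?thesis by simp
    qed
    moreover have "real m \<le> real_of_int \<lfloor>t\<rfloor>" using m R t by (simp add: le_nat_iff)
    moreover have "real_of_int \<lfloor>t\<rfloor> \<le> t" by simp
    ultimately have "R < real m" "real m \<le> t" by linarith+
    thus "m \<in> {m::nat. R < real m \<and> real m \<le> t}" by simp
  qed
  have "card {nat \<lfloor>R\<rfloor> + 1..nat \<lfloor>t\<rfloor>} \<le> card {m::nat. R < real m \<and> real m \<le> t}"
    by (rule card_mono[OF fin sub])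
  moreover have "real (card {nat \<lfloor>R\<rfloor> + 1..nat \<lfloor>t\<rfloor>}) \<ge> real (nat \<lfloor>t\<rfloor>) - real (nat \<lfloor>R\<rfloor>)"
    by simp
  moreover have "real (nat \<lfloor>t\<rfloor>) = real_of_int \<lfloor>t\<rfloor>" using R t by simp
  moreover have "t - 1 < real_of_int \<lfloor>t\<rfloor>" by linarith
  ultimately show "t - 1 - real (nat \<lfloor>R\<rfloor>) \<le> real (card {m::nat. R < real m \<and> real m \<le> t})"
    by linarith
qed


lemma I1_annulus_eq:
  assumes "0 \<le> R"
  shows "{b \<in> {b\<in>I1. R < cmod b}. cmod b \<le> t} = {b \<in> {b\<in>I2. R < cmod b}. cmod b \<le> t}
    \<union> cnj ` {b \<in> {b\<in>I2. R < cmod b}. cmod b \<le> t} \<union> of_nat ` {m::nat. R < real m \<and> real m \<le> t}"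
proof -
  have "1 \<le> m" if "R < real m" for m :: nat using that assms by linarith
  then show ?thesis unfolding I1_eq by (auto simp: in_image_cnj_iff)
qed

lemma I1_annulus_card:
  assumes R: "1 \<le> R" and t: "R \<le> t"
  shows "finite {b \<in> {b\<in>I1. R < cmod b}. cmod b \<le> t}"
    "real (card {b \<in> {b\<in>I1. R < cmod b}. cmod b \<le> t})
      = 2 * (real (card (quarter_disc_points t)) - real (card (quarter_disc_points R)))
        + real (card {m::nat. R < real m \<and> real m \<le> t})"
proof -
  define D where "D = {b \<in> {b\<in>I2. R < cmod b}. cmod b \<le> t}"
  define W where "W = {m::nat. R < real m \<and> real m \<le> t}"
  have fin: "finite D" "finite W"
    using I2_annulus_card(1)[of R t] axis_annulus(2)[of R t] R t by (auto simp: D_def W_def)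
  have "D \<subseteq> {b. Im b < 0}" by (auto simp: D_def I2_def)
  then have "cnj ` D \<subseteq> {b. 0 < Im b}" by auto
  moreover note \<open>D \<subseteq> {b. Im b < 0}\<close>
  moreover have "of_nat ` W \<subseteq> {b. Im b = 0}" by auto
  ultimately have disjoint: "D \<inter> cnj ` D = {}" "(D \<union> cnj ` D) \<inter> of_nat ` W = {}"
    by fastforce+
  have eq: "{b \<in> {b\<in>I1. R < cmod b}. cmod b \<le> t} = D \<union> cnj ` D \<union> of_nat ` W"
    unfolding D_def W_def using R by (intro I1_annulus_eq) simp
  then show "finite {b \<in> {b\<in>I1. R < cmod b}. cmod b \<le> t}" using fin by simp
  have "card (D \<union> cnj ` D \<union> of_nat ` W) = card D + card (cnj ` D) + card (of_nat ` W :: complex set)"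
    using fin disjoint by (simp add: card_Un_disjoint)
  also have "\<dots> = 2 * card D + card W"
    by (simp add: card_image inj_on_def)
  finally show "real (card {b \<in> {b\<in>I1. R < cmod b}. cmod b \<le> t})
      = 2 * (real (card (quarter_disc_points t)) - real (card (quarter_disc_points R)))
        + real (card {m::nat. R < real m \<and> real m \<le> t})"
    unfolding eq D_def W_def using I2_annulus_card(2)[of R t] R t by simp
qed

lemma finite_I1_annulus:
  assumes "1 \<le> R" shows "finite {b \<in> {b\<in>I1. R < cmod b}. cmod b \<le> t}"
proof (cases "R \<le> t")
  case True
  then show ?thesis using I1_annulus_card(1) assms by blast
next
  case False
  then have "{b \<in> {b\<in>I1. R < cmod b}. cmod b \<le> t} = {}" by auto
  then show ?thesis by (simp only: finite.emptyI)
qed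

lemma card_I1_annulus_ge:
  assumes R: "2 < R" and t: "R + sqrt 2 \<le> t"
  shows "(pi - 2 * thetaR R) / 2 * (t^2 - (R + sqrt 2)^2) \<le> real (card {b \<in> {b\<in>I1. R < cmod b}. cmod b \<le> t})"
proof -
  have t3: "3 \<le> t" using R_plus_sqrt2_ge_3[OF R] t by linarith
  have Rt: "R \<le> t" using t real_sqrt_ge_zero[of 2] by linarith
  have "(pi - 2 * thetaR R) / 2 * (t^2 - (R + sqrt 2)^2) = (pi / 2 - arcsin (1 / (R + sqrt 2))) * (t^2 - (R + sqrt 2)^2)"
    by (simp add: thetaR_def field_simps)
  also have "\<dots> \<le> 2 * (quarter_disc_count_lower t - (pi / 4 * R^2 - R / 2 + sqrt (R^2 - (real (nat \<lfloor>R\<rfloor>))^2) / 2))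
       + (t - 1 - real (nat \<lfloor>R\<rfloor>))" by (rule area_bound_I1[OF R t])
  also have "\<dots> \<le> real (card {b \<in> {b\<in>I1. R < cmod b}. cmod b \<le> t})"
    using quarter_disc_count_lower_le_card[of t] card_quarter_disc_points_R_le(1)[OF R]
      axis_annulus(1)[of R t] I1_annulus_card(2)[of R t] power_mono[OF t3, of 2] R Rt t3
    by simp
  finally show ?thesis .
qed


lemma infsum_I2_tail_ge:
  assumes R: "2 < R" and s: "1 < s"
    and summ: "(\<lambda>b. 1 / cmod b powr (2 * s)) summable_on {b\<in>I2. R < cmod b}"
  shows "(pi / 2 - 2 * thetaR R) * (1 / (2 * s - 2)) * (1 / (R + sqrt 2)) powr (2 * s - 2)
    \<le> (\<Sum>\<^sub>\<infinity>b\<in>{b\<in>I2. R < cmod b}. 1 / cmod b powr (2 * s))"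
proof (rule infsum_powr_ge_of_count_ge[OF s _ summ])
  show "0 < R + sqrt 2" using R by (simp add: add_pos_nonneg)
  fix b assume "b \<in> {b\<in>I2. R < cmod b}" hence "R < cmod b" by simp
  thus "0 < cmod b" using R by linarith
next
  fix t show "finite {b \<in> {b\<in>I2. R < cmod b}. cmod b \<le> t}" by (rule finite_I2_annulus) (use R in simp)
next
  fix t assume "R + sqrt 2 \<le> t"
  thus "(pi / 2 - 2 * thetaR R) / 2 * (t^2 - (R + sqrt 2)^2) \<le> real (card {b \<in> {b\<in>I2. R < cmod b}. cmod b \<le> t})"
    by (rule card_I2_annulus_ge[OF R])
qed

lemma infsum_I1_tail_ge:
  assumes R: "2 < R" and s: "1 < s"
    and summ: "(\<lambda>b. 1 / cmod b powr (2 * s)) summable_on {b\<in>I1. R < cmod b}"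
  shows "(pi - 2 * thetaR R) * (1 / (2 * s - 2)) * (1 / (R + sqrt 2)) powr (2 * s - 2)
    \<le> (\<Sum>\<^sub>\<infinity>b\<in>{b\<in>I1. R < cmod b}. 1 / cmod b powr (2 * s))"
proof (rule infsum_powr_ge_of_count_ge[OF s _ summ])
  show "0 < R + sqrt 2" using R by (simp add: add_pos_nonneg)
  fix b assume "b \<in> {b\<in>I1. R < cmod b}" hence "R < cmod b" by simp
  thus "0 < cmod b" using R by linarith
next
  fix t show "finite {b \<in> {b\<in>I1. R < cmod b}. cmod b \<le> t}"
    by (rule finite_I1_annulus) (use R in simp)
next
  fix t assume "R + sqrt 2 \<le> t"
  thus "(pi - 2 * thetaR R) / 2 * (t^2 - (R + sqrt 2)^2) \<le> real (card {b \<in> {b\<in>I1. R < cmod b}. cmod b \<le> t})"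
    by (rule card_I1_annulus_ge[OF R])
qed

context eigenfunction
begin

lemma tail_sum_lower_bound_I1:
  assumes "B = I1" "1 < s"
    and z: "0 \<le> Re z" "Re z \<le> 1" "\<bar>Im z\<bar> \<le> 1/2" and R: "2 < R"
    and summable: "(\<lambda>b. v (theta b z) / norm (z + b) powr (2 * s)) summable_on {b\<in>B. R < norm b}"
  shows "CRs R s * v 0 * (pi - 2 * thetaR R) * (1 / (2 * s - 2)) * (1 / (R + sqrt 2)) powr (2 * s - 2)
    \<le> (\<Sum>\<^sub>\<infinity>b\<in>{b\<in>I1. R < norm b}. v (theta b z) / norm (z + b) powr (2 * s))"
proof -
  have "(pi - 2 * thetaR R) * (1 / (2 * s - 2)) * (1 / (R + sqrt 2)) powr (2 * s - 2)
      \<le> (\<Sum>\<^sub>\<infinity>b\<in>{b\<in>I1. R < norm b}. 1 / norm b powr (2 * s))"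
    using assms summable_on_tail_powr by (intro infsum_I1_tail_ge) auto
  then show ?thesis using tail_sum_lower_bound[OF z R summable] assms(1) by (simp only: mult.assoc)
qed

lemma tail_sum_lower_bound_I2:
  assumes "B = I2" "1 < s"
    and z: "0 \<le> Re z" "Re z \<le> 1" "\<bar>Im z\<bar> \<le> 1/2" and R: "2 < R"
    and summable: "(\<lambda>b. v (theta b z) / norm (z + b) powr (2 * s)) summable_on {b\<in>B. R < norm b}"
  shows "CRs R s * v 0 * (pi / 2 - 2 * thetaR R) * (1 / (2 * s - 2)) * (1 / (R + sqrt 2)) powr (2 * s - 2)
    \<le> (\<Sum>\<^sub>\<infinity>b\<in>{b\<in>I2. R < norm b}. v (theta b z) / norm (z + b) powr (2 * s))"
proof -
  have "(pi / 2 - 2 * thetaR R) * (1 / (2 * s - 2)) * (1 / (R + sqrt 2)) powr (2 * s - 2)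
      \<le> (\<Sum>\<^sub>\<infinity>b\<in>{b\<in>I2. R < norm b}. 1 / norm b powr (2 * s))"
    using assms summable_on_tail_powr by (intro infsum_I2_tail_ge) auto
  then show ?thesis using tail_sum_lower_bound[OF z R summable] assms(1) by (simp only: mult.assoc)
qed

end

theorem theorem5p13:
  fixes U :: "complex set" and B :: "complex set" and s R :: real and v :: "complex \<Rightarrow> real"
  assumes "bounded U" and "open U" and "mildly_regular U"
    and "ball (1/2) (1/2) \<subseteq> U" and "cball (1/2) (1/2) \<subseteq> closure U"
    and "\<forall>z\<in>U. Re z > 0"
    and "\<forall>z\<in>closure U. 0 \<le> Re z \<and> Re z \<le> 1 \<and> \<bar>Im z\<bar> \<le> 1/2"
    and "B \<subseteq> I1" and "infinite B"
    and "s > tau B"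
    and "continuous_on (closure U) v" and "\<forall>z\<in>closure U. v z > 0"
    and "\<exists>lam. \<forall>z\<in>closure U.
           ((\<lambda>b. norm (z + b) powr (-2 * s) * v (theta b z)) has_sum (lam * v z)) B"
    and "R > 2"
  shows "(\<forall>z\<in>closure U.
            (\<Sum>\<^sub>\<infinity>b\<in>{b\<in>B. norm b > R}. v (theta b z) / norm (z + b) powr (2 * s))
            \<ge> CRs R s * v 0 * (\<Sum>\<^sub>\<infinity>b\<in>{b\<in>B. norm b > R}. 1 / norm b powr (2 * s)))
       \<and> (B = I1 \<and> s > 1 \<longrightarrow> (\<forall>z\<in>closure U.
            (\<Sum>\<^sub>\<infinity>b\<in>{b\<in>I1. norm b > R}. v (theta b z) / norm (z + b) powr (2 * s))
            \<ge> CRs R s * v 0 * (pi - 2 * thetaR R) * (1 / (2 * s - 2))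
                * (1 / (R + sqrt 2)) powr (2 * s - 2)))
       \<and> (B = I2 \<and> s > 1 \<longrightarrow> (\<forall>z\<in>closure U.
            (\<Sum>\<^sub>\<infinity>b\<in>{b\<in>I2. norm b > R}. v (theta b z) / norm (z + b) powr (2 * s))
            \<ge> CRs R s * v 0 * (pi / 2 - 2 * thetaR R) * (1 / (2 * s - 2))
                * (1 / (R + sqrt 2)) powr (2 * s - 2)))"
proof -
  obtain lam where eigen_U: "\<forall>z\<in>closure U.
      ((\<lambda>b. norm (z + b) powr (-2 * s) * v (theta b z)) has_sum (lam * v z)) B"
    using assms(13) by blast
  have D: "disc_D \<subseteq> closure U" using assms(5) by (simp add: disc_D_def)
  interpret eigenfunction B s v lam
    using assms(8,9,11,12) eigen_U D continuous_on_subset[OF assms(11) D]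
    by unfold_locales (auto simp: I1_def)
  have "0 \<le> Re z" "Re z \<le> 1" "\<bar>Im z\<bar> \<le> 1/2"
    and "(\<lambda>b. v (theta b z) / norm (z + b) powr (2 * s)) summable_on {b\<in>B. R < norm b}"
    if "z \<in> closure U" for z
    using that assms(7) summable_on_tail_of_has_sum eigen_U by auto
  then show ?thesis
    using tail_sum_lower_bound[OF _ _ _ _ _ order_refl] tail_sum_lower_bound_I1 tail_sum_lower_bound_I2
      assms(14) by auto
qed

end
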